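(* Let $m\ge 1$, let $(n_1,a_1),\dots,(n_{m-1},a_{m-1})$ be pairwise distinct elements of $\mathbb{N}\times\mathbb{D}$, and let $B_1,\dots,B_{m-1}$ be the Gram–Schmidt orthonormalization of $e_{n_1,a_1},\dots,e_{n_{m-1},a_{m-1}}$. Let $Q$ denote the orthogonal projection of $H^2(\mathbb{D})$ onto the orthogonal complement of $\mathrm{span}\{B_1,\dots,B_{m-1}\}$, and for $(n,a)\in\mathbb{N}\times\mathbb{D}$ not among $(n_1,a_1),\dots,(n_{m-1},a_{m-1})$ put $$B_m^{(n,a)}=\frac{Q\,e_{n,a}}{\|Q\,e_{n,a}\|}=\frac{e_{n,a}-\sum_{l=1}^{m-1}\langle e_{n,a},B_l\rangle B_l}{\left\|e_{n,a}-\sum_{l=1}^{m-1}\langle e_{n,a},B_l\rangle B_l\right\|}.$$ Then for every $f\in H^2(\mathbb{D})$: (i) $|\langle f,B_m^{(n,a)}\rangle|\to 0$ as $|a|\to 1$ or $n\to\infty$; and (ii) there exists a pair $(n_m,a_m)\in\mathbb{N}\times\mathbb{D}$, not among $(n_1,a_1),\dots,(n_{m-1},a_{m-1})$, such that $$|\langle f,B_m^{(n_m,a_m)}\rangle|=\sup\{|\langle f,B_m^{(n,a)}\rangle|:(n,a)\in\mathbb{N}\times\mathbb{D}\setminus\{(n_1,a_1),\dots,(n_{m-1},a_{m-1})\}\}.$$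
   Context: $\mathbb{D}$ is the open unit disc; $H^2(\mathbb{D})$ the Hardy space with inner product $\langle f,g\rangle=\frac{1}{2\pi}\int_0^{2\pi}f(e^{it})\overline{g(e^{it})}\,dt$. For $n\in\mathbb{N}=\{0,1,\dots\}$ and $a\in\mathbb{D}$, $k_{n,a}(z)=\left(\frac{\partial}{\partial\overline{a}}\right)^n\frac{1}{1-\overline{a}z}=\frac{n!\,z^n}{(1-\overline{a}z)^{n+1}}$ and $e_{n,a}=k_{n,a}/\|k_{n,a}\|$; distinct pairs give linearly independent functions, so $Q e_{n,a}\neq 0$ for pairs not among the given ones. *)

theory Defs
  imports "HOL-Complex_Analysis.Complex_Analysis"
begin

text \<open>Hardy space H^2 of the unit disc, realised via Taylor coefficients at 0.
  An element is a function holomorphic on the open unit disc whose Taylor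
  coefficients are square-summable; the inner product
  (1/2pi) int f(e^it) conj(g(e^it)) dt equals the coefficient inner product.\<close>

definition taylor_coeff :: "(complex \<Rightarrow> complex) \<Rightarrow> nat \<Rightarrow> complex" where
  "taylor_coeff f k = (deriv ^^ k) f 0 / of_nat (fact k)"

definition H2 :: "(complex \<Rightarrow> complex) set" where
  "H2 = {f. f holomorphic_on ball 0 1 \<and> summable (\<lambda>k. (cmod (taylor_coeff f k))\<^sup>2)}"

definition h2_inner :: "(complex \<Rightarrow> complex) \<Rightarrow> (complex \<Rightarrow> complex) \<Rightarrow> complex" where
  "h2_inner f g = (\<Sum>k. taylor_coeff f k * cnj (taylor_coeff g k))"

definition h2_norm :: "(complex \<Rightarrow> complex) \<Rightarrow> real" where
  "h2_norm f = sqrt (Re (h2_inner f f))"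

definition kern :: "nat \<Rightarrow> complex \<Rightarrow> complex \<Rightarrow> complex" where
  "kern n a = (\<lambda>z. of_nat (fact n) * z ^ n / (1 - cnj a * z) ^ (n + 1))"

definition ekern :: "nat \<Rightarrow> complex \<Rightarrow> complex \<Rightarrow> complex" where
  "ekern n a = (\<lambda>z. kern n a z / of_real (h2_norm (kern n a)))"

definition proj_perp :: "(complex \<Rightarrow> complex) list \<Rightarrow> (complex \<Rightarrow> complex) \<Rightarrow> complex \<Rightarrow> complex" where
  "proj_perp Bs g = (\<lambda>z. g z - (\<Sum>B\<leftarrow>Bs. h2_inner g B * B z))"

definition h2_normalize :: "(complex \<Rightarrow> complex) \<Rightarrow> complex \<Rightarrow> complex" where
  "h2_normalize g = (\<lambda>z. g z / of_real (h2_norm g))"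

text \<open>Gram--Schmidt; gs_rev works on the reversed list (last element first).\<close>

fun gs_rev :: "(nat \<times> complex) list \<Rightarrow> (complex \<Rightarrow> complex) list" where
  "gs_rev [] = []"
| "gs_rev (p # ps) =
     (let Bs = gs_rev ps in h2_normalize (proj_perp Bs (ekern (fst p) (snd p))) # Bs)"

definition gram_schmidt :: "(nat \<times> complex) list \<Rightarrow> (complex \<Rightarrow> complex) list" where
  "gram_schmidt ps = rev (gs_rev (rev ps))"

definition Bm :: "(nat \<times> complex) list \<Rightarrow> nat \<Rightarrow> complex \<Rightarrow> complex \<Rightarrow> complex" where
  "Bm ps n a = h2_normalize (proj_perp (gram_schmidt ps) (ekern n a))"

end

theory Submission
  imports Defs
begin

(* Write Q for the orthogonal projection onto the complement of span {B_1, ..., B_(m-1)}, so that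
   <f, B_m^(n,a)> = <Q f, e_(n,a)> / ||Q e_(n,a)||.

   (i) The normalised kernels tend weakly to 0 as (n, a) leaves every compact subset of N x D:
   ||k_(n,a)||^2 >= (n!)^2 / (1 - |a|^2) blows up, while <p, k_(n,a)> stays bounded for the
   polynomials p, which are dense in H^2. So the numerator tends to 0, while
   ||Q e_(n,a)||^2 = 1 - sum_l |<e_(n,a), B_l>|^2 tends to 1.

   (ii) By (i), a positive supremum can only be approached on a compact set {n < N} x {|a| <= r}.
   There the value at (n, a) is upper semicontinuous up to a shift of n: by Cauchy-Schwarz against
   h = Q k_(n+j,b), with j least such that this is nonzero, the value near a = b is bounded by a
   quotient of the holomorphic functions (Q f)^(n) and h^(n). Both vanish to order j at b, so the
   quotient tends to the value at (n + j, b). A finite subcover then shows the supremum is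
   attained. *)

section \<open>Taylor coefficients and the space H2\<close>

lemma taylor_coeff_eqI:
  assumes r: "r > 0" and S: "\<And>z. z \<in> ball 0 r \<Longrightarrow> (\<lambda>k. c k * z ^ k) sums f z"
  shows "taylor_coeff f k = c k"
proof -
  define F where "F = Abs_fps c"
  have "summable (\<lambda>n. c n * (of_real (r/2))^n)"
    using S[of "of_real (r/2)"] r by (auto simp: sums_iff)
  from conv_radius_geI[OF this] have "ereal (r/2) \<le> fps_conv_radius F"
    using r by (simp add: F_def fps_conv_radius_def)
  hence pos: "fps_conv_radius F > 0" using r
    by (metis ereal_less(2) half_gt_zero order_less_le_trans)
  have "eventually (\<lambda>z. z \<in> ball 0 r) (nhds (0::complex))"
    using r by (intro eventually_nhds_in_open) auto
  hence "eventually (\<lambda>z. eval_fps F z = f z) (nhds 0)"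
    by eventually_elim (use S in \<open>auto simp: eval_fps_def F_def sums_iff\<close>)
  hence "f has_fps_expansion F" using pos by (simp add: has_fps_expansion_def)
  from fps_nth_fps_expansion[OF this, of k] show ?thesis
    by (simp add: taylor_coeff_def F_def)
qed

lemma taylor_coeff_zero [simp]: "taylor_coeff (\<lambda>z. 0) k = 0"
  by (simp add: taylor_coeff_def)

lemma taylor_coeff_add:
  assumes "f holomorphic_on S" "g holomorphic_on S" "open S" "0 \<in> S"
  shows "taylor_coeff (\<lambda>z. f z + g z) k = taylor_coeff f k + taylor_coeff g k"
  unfolding taylor_coeff_def higher_deriv_add[OF assms] by (simp add: add_divide_distrib)

lemma taylor_coeff_diff:
  assumes "f holomorphic_on S" "g holomorphic_on S" "open S" "0 \<in> S"
  shows "taylor_coeff (\<lambda>z. f z - g z) k = taylor_coeff f k - taylor_coeff g k"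
  unfolding taylor_coeff_def higher_deriv_diff[OF assms] by (simp add: diff_divide_distrib)

lemma taylor_coeff_cmult:
  assumes "f holomorphic_on S" "open S" "0 \<in> S"
  shows "taylor_coeff (\<lambda>z. c * f z) k = c * taylor_coeff f k"
  unfolding taylor_coeff_def higher_deriv_cmult[OF assms(1,3,2)] by simp

lemma H2_holomorphic: "f \<in> H2 \<Longrightarrow> f holomorphic_on ball 0 1"
  by (simp add: H2_def)

lemma H2_summable: "f \<in> H2 \<Longrightarrow> summable (\<lambda>k. (cmod (taylor_coeff f k))\<^sup>2)"
  by (simp add: H2_def)

lemma holomorphic_on_ball_in_H2:
  assumes R: "R > 1" and f: "f holomorphic_on ball 0 R"
  shows "f \<in> H2"
proof -
  define \<rho> where "\<rho> = (1 + R) / 2"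
  have \<rho>: "1 < \<rho>" "\<rho> < R" using R by (auto simp: \<rho>_def)
  have "(\<lambda>n. (deriv ^^ n) f 0 / fact n * (of_real \<rho> - 0)^n) sums f (of_real \<rho>)"
    by (rule holomorphic_power_series[OF f]) (use \<rho> in auto)
  hence "(\<lambda>n. taylor_coeff f n * (of_real \<rho>)^n) \<longlonglongrightarrow> 0"
    by (intro summable_LIMSEQ_zero) (auto simp: sums_iff taylor_coeff_def)
  hence ev: "eventually (\<lambda>n. norm (taylor_coeff f n * (of_real \<rho>)^n) < 1) sequentially"
    by (rule order_tendstoD(2)[OF tendsto_norm_zero]) simp
  have "summable (\<lambda>n. (cmod (taylor_coeff f n))\<^sup>2)"
  proof (rule summable_comparison_test_ev)
    show "summable (\<lambda>n. (1 / \<rho>^2) ^ n)"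
      using \<rho> by (intro summable_geometric) (auto simp: power_less_one_iff)
    show "eventually (\<lambda>n. norm ((cmod (taylor_coeff f n))\<^sup>2) \<le> (1 / \<rho>^2) ^ n) sequentially"
      using ev
    proof eventually_elim
      case (elim n)
      have "cmod (taylor_coeff f n) * \<rho>^n < 1" using elim \<rho>
        by (simp add: norm_mult norm_power)
      hence "cmod (taylor_coeff f n) \<le> 1 / \<rho>^n" using \<rho>
        by (simp add: field_simps)
      hence "(cmod (taylor_coeff f n))\<^sup>2 \<le> (1 / \<rho>^n)^2"
        by (intro power_mono) auto
      thus ?case by (simp add: power_divide power_mult[symmetric] mult.commute)
    qed
  qed
  moreover have "f holomorphic_on ball 0 1" using f by (rule holomorphic_on_subset) (use R in auto)
  ultimately show ?thesis by (simp add: H2_def)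
qed

lemma summable_norm_sq_add:
  fixes a b :: "nat \<Rightarrow> 'a::real_normed_vector"
  assumes "summable (\<lambda>k. (norm (a k))\<^sup>2)" "summable (\<lambda>k. (norm (b k))\<^sup>2)"
  shows "summable (\<lambda>k. (norm (a k + b k))\<^sup>2)"
proof (rule summable_comparison_test[OF _ summable_add[OF summable_mult[OF assms(1), of 2]
      summable_mult[OF assms(2), of 2]]], intro exI allI impI)
  fix k
  have "(norm (a k + b k))\<^sup>2 \<le> (norm (a k) + norm (b k))\<^sup>2"
    by (intro power_mono norm_triangle_ineq) auto
  also have "\<dots> \<le> 2 * (norm (a k))\<^sup>2 + 2 * (norm (b k))\<^sup>2"
    using sum_squares_bound[of "norm (a k)" "norm (b k)"] by (simp add: power2_sum)
  finally show "norm ((norm (a k + b k))\<^sup>2) \<le> 2 * (norm (a k))\<^sup>2 + 2 * (norm (b k))\<^sup>2"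
    by simp
qed

lemma H2_zero: "(\<lambda>z. 0) \<in> H2"
  by (simp add: H2_def)

lemma H2_add: "f \<in> H2 \<Longrightarrow> g \<in> H2 \<Longrightarrow> (\<lambda>z. f z + g z) \<in> H2"
  unfolding H2_def by (auto intro!: holomorphic_intros simp: taylor_coeff_add summable_norm_sq_add)

lemma H2_cmult: "f \<in> H2 \<Longrightarrow> (\<lambda>z. c * f z) \<in> H2"
  unfolding H2_def
  by (auto intro!: holomorphic_intros summable_mult simp: taylor_coeff_cmult norm_mult power_mult_distrib)

lemma H2_diff: "f \<in> H2 \<Longrightarrow> g \<in> H2 \<Longrightarrow> (\<lambda>z. f z - g z) \<in> H2"
  using H2_add[of f "\<lambda>z. (-1) * g z"] H2_cmult[of g "-1"] by simp

lemma H2_cdiv: "f \<in> H2 \<Longrightarrow> (\<lambda>z. f z / c) \<in> H2"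
  using H2_cmult[of f "inverse c"] by (simp add: field_simps)

lemma H2_sum_list:
  "(\<And>B. B \<in> set Bs \<Longrightarrow> B \<in> H2) \<Longrightarrow> (\<lambda>z. \<Sum>B\<leftarrow>Bs. c B * B z) \<in> H2"
  by (induction Bs) (auto intro: H2_zero H2_add[OF H2_cmult])

section \<open>The inner product and the norm\<close>

lemma summable_norm_mult_if_sq_summable:
  fixes a b :: "nat \<Rightarrow> 'a::real_normed_algebra"
  assumes "summable (\<lambda>k. (norm (a k))\<^sup>2)" "summable (\<lambda>k. (norm (b k))\<^sup>2)"
  shows "summable (\<lambda>k. norm (a k * b k))"
proof (rule summable_comparison_test[OF _ summable_add[OF assms]], intro exI allI impI)
  fix k
  have "norm (a k * b k) \<le> norm (a k) * norm (b k)" by (rule norm_mult_ineq)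
  also have "\<dots> \<le> (norm (a k))\<^sup>2 + (norm (b k))\<^sup>2"
    using sum_squares_bound[of "norm (a k)" "norm (b k)"]
      mult_nonneg_nonneg[OF norm_ge_zero norm_ge_zero, of "a k" "b k"]
    unfolding power2_eq_square by linarith
  finally show "norm (norm (a k * b k)) \<le> (norm (a k))\<^sup>2 + (norm (b k))\<^sup>2" by simp
qed

lemma summable_h2_inner:
  "f \<in> H2 \<Longrightarrow> g \<in> H2 \<Longrightarrow> summable (\<lambda>k. taylor_coeff f k * cnj (taylor_coeff g k))"
  by (rule summable_norm_cancel, rule summable_norm_mult_if_sq_summable) (auto dest: H2_summable)

lemma h2_inner_add_left:
  assumes "f \<in> H2" "g \<in> H2" "h \<in> H2"
  shows "h2_inner (\<lambda>z. f z + g z) h = h2_inner f h + h2_inner g h"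
proof -
  have "taylor_coeff (\<lambda>z. f z + g z) k = taylor_coeff f k + taylor_coeff g k" for k
    using assms by (simp add: taylor_coeff_add[OF H2_holomorphic H2_holomorphic])
  then show ?thesis
    unfolding h2_inner_def using assms
    by (simp add: distrib_right suminf_add[OF summable_h2_inner summable_h2_inner])
qed

lemma h2_inner_diff_left:
  assumes "f \<in> H2" "g \<in> H2" "h \<in> H2"
  shows "h2_inner (\<lambda>z. f z - g z) h = h2_inner f h - h2_inner g h"
proof -
  have "taylor_coeff (\<lambda>z. f z - g z) k = taylor_coeff f k - taylor_coeff g k" for k
    using assms by (simp add: taylor_coeff_diff[OF H2_holomorphic H2_holomorphic])
  then show ?thesis
    unfolding h2_inner_def using assms
    by (simp add: left_diff_distrib suminf_diff[OF summable_h2_inner summable_h2_inner])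
qed

lemma h2_inner_cmult_left:
  assumes "f \<in> H2" "h \<in> H2"
  shows "h2_inner (\<lambda>z. c * f z) h = c * h2_inner f h"
proof -
  have "taylor_coeff (\<lambda>z. c * f z) k = c * taylor_coeff f k" for k
    using assms by (simp add: taylor_coeff_cmult[OF H2_holomorphic])
  then show ?thesis
    unfolding h2_inner_def using assms by (simp add: mult.assoc suminf_mult[OF summable_h2_inner])
qed

lemma h2_inner_cdiv_left:
  "f \<in> H2 \<Longrightarrow> h \<in> H2 \<Longrightarrow> h2_inner (\<lambda>z. f z / c) h = h2_inner f h / c"
  using h2_inner_cmult_left[of f h "inverse c"] by (simp add: field_simps)

lemma h2_inner_zero_left [simp]: "h2_inner (\<lambda>z. 0) h = 0"
  by (simp add: h2_inner_def)

lemma h2_inner_zero_right [simp]: "h2_inner h (\<lambda>z. 0) = 0"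
  by (simp add: h2_inner_def)

lemma h2_inner_sum_list_left:
  assumes "\<And>B. B \<in> set Bs \<Longrightarrow> B \<in> H2" "h \<in> H2"
  shows "h2_inner (\<lambda>z. \<Sum>B\<leftarrow>Bs. c B * B z) h = (\<Sum>B\<leftarrow>Bs. c B * h2_inner B h)"
  using assms(1)
proof (induction Bs)
  case (Cons B Bs)
  then show ?case
    using assms(2) by (simp add: h2_inner_add_left H2_cmult H2_sum_list h2_inner_cmult_left)
qed simp

lemma h2_inner_commute: "f \<in> H2 \<Longrightarrow> g \<in> H2 \<Longrightarrow> h2_inner g f = cnj (h2_inner f g)"
  unfolding h2_inner_def
  using sums_cnj[THEN iffD2, OF summable_sums[OF summable_h2_inner[of f g]]]
  by (simp add: sums_iff mult.commute)

lemma h2_inner_diff_right: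
  "f \<in> H2 \<Longrightarrow> g \<in> H2 \<Longrightarrow> h \<in> H2 \<Longrightarrow>
   h2_inner h (\<lambda>z. f z - g z) = h2_inner h f - h2_inner h g"
  by (subst (1 2 3) h2_inner_commute) (auto simp: H2_diff h2_inner_diff_left)

lemma h2_inner_cdiv_right:
  "f \<in> H2 \<Longrightarrow> h \<in> H2 \<Longrightarrow> h2_inner h (\<lambda>z. f z / c) = h2_inner h f / cnj c"
  by (subst (1 2) h2_inner_commute) (auto simp: H2_cdiv h2_inner_cdiv_left)

lemma h2_inner_sum_list_right:
  assumes "\<And>B. B \<in> set Bs \<Longrightarrow> B \<in> H2" "h \<in> H2"
  shows "h2_inner h (\<lambda>z. \<Sum>B\<leftarrow>Bs. c B * B z) = (\<Sum>B\<leftarrow>Bs. cnj (c B) * h2_inner h B)"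
proof -
  have "h2_inner h (\<lambda>z. \<Sum>B\<leftarrow>Bs. c B * B z) = cnj (\<Sum>B\<leftarrow>Bs. c B * h2_inner B h)"
    using assms by (subst h2_inner_commute) (auto simp: H2_sum_list h2_inner_sum_list_left)
  also have "\<dots> = (\<Sum>B\<leftarrow>Bs. cnj (c B) * h2_inner h B)"
    using assms by (induction Bs) (auto simp: h2_inner_commute[OF _ assms(2)])
  finally show ?thesis .
qed

definition h2_sqnorm :: "(complex \<Rightarrow> complex) \<Rightarrow> real" where
  "h2_sqnorm f = (\<Sum>k. (cmod (taylor_coeff f k))\<^sup>2)"

lemma h2_sqnorm_zero [simp]: "h2_sqnorm (\<lambda>z. 0) = 0"
  by (simp add: h2_sqnorm_def)

lemma h2_inner_self: "f \<in> H2 \<Longrightarrow> h2_inner f f = of_real (h2_sqnorm f)"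
  unfolding h2_inner_def h2_sqnorm_def
  by (simp add: complex_norm_square suminf_of_real[OF H2_summable] del: of_real_power)

lemma h2_sqnorm_nonneg: "f \<in> H2 \<Longrightarrow> 0 \<le> h2_sqnorm f"
  unfolding h2_sqnorm_def by (intro suminf_nonneg H2_summable) auto

lemma h2_norm_eq_sqrt: "f \<in> H2 \<Longrightarrow> h2_norm f = sqrt (h2_sqnorm f)"
  by (simp add: h2_norm_def h2_inner_self)

lemma h2_norm_power2: "f \<in> H2 \<Longrightarrow> (h2_norm f)\<^sup>2 = h2_sqnorm f"
  by (simp add: h2_norm_eq_sqrt h2_sqnorm_nonneg)

lemma h2_norm_nonneg: "f \<in> H2 \<Longrightarrow> 0 \<le> h2_norm f"
  by (simp add: h2_norm_eq_sqrt h2_sqnorm_nonneg)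

lemma h2_norm_eq_0_iff: "f \<in> H2 \<Longrightarrow> h2_norm f = 0 \<longleftrightarrow> h2_sqnorm f = 0"
  by (simp add: h2_norm_eq_sqrt h2_sqnorm_nonneg)

lemma h2_norm_pos_iff: "f \<in> H2 \<Longrightarrow> 0 < h2_norm f \<longleftrightarrow> h2_sqnorm f \<noteq> 0"
  using h2_sqnorm_nonneg by (simp add: h2_norm_eq_sqrt order_less_le)

lemma taylor_coeff_eq_0_if_h2_sqnorm_0: "f \<in> H2 \<Longrightarrow> h2_sqnorm f = 0 \<Longrightarrow> taylor_coeff f k = 0"
  unfolding h2_sqnorm_def using suminf_eq_zero_iff[OF H2_summable[of f]] by auto

lemma h2_inner_null_left: "f \<in> H2 \<Longrightarrow> h2_sqnorm f = 0 \<Longrightarrow> h2_inner f g = 0"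
  unfolding h2_inner_def by (simp add: taylor_coeff_eq_0_if_h2_sqnorm_0)

lemma h2_inner_null_right: "f \<in> H2 \<Longrightarrow> h2_sqnorm f = 0 \<Longrightarrow> h2_inner g f = 0"
  unfolding h2_inner_def by (simp add: taylor_coeff_eq_0_if_h2_sqnorm_0)

lemma h2_cauchy_schwarz:
  assumes "f \<in> H2" "g \<in> H2"
  shows "cmod (h2_inner f g) \<le> h2_norm f * h2_norm g"
proof -
  let ?a = "\<lambda>k. cmod (taylor_coeff f k)" and ?b = "\<lambda>k. cmod (taylor_coeff g k)"
  have summ: "summable (\<lambda>k. cmod (taylor_coeff f k * cnj (taylor_coeff g k)))"
    using assms by (intro summable_norm_mult_if_sq_summable) (auto dest: H2_summable)
  have "cmod (h2_inner f g) \<le> (\<Sum>k. cmod (taylor_coeff f k * cnj (taylor_coeff g k)))"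
    unfolding h2_inner_def by (rule summable_norm[OF summ])
  also have "\<dots> \<le> sqrt (h2_sqnorm f) * sqrt (h2_sqnorm g)"
  proof (rule suminf_le_const[OF summ])
    fix n
    have "(\<Sum>k<n. cmod (taylor_coeff f k * cnj (taylor_coeff g k))) = (\<Sum>k<n. \<bar>?a k\<bar> * \<bar>?b k\<bar>)"
      by (simp add: norm_mult)
    also have "\<dots> \<le> L2_set ?a {..<n} * L2_set ?b {..<n}" by (rule L2_set_mult_ineq)
    also have "\<dots> \<le> sqrt (h2_sqnorm f) * sqrt (h2_sqnorm g)"
      unfolding L2_set_def h2_sqnorm_def using assms
      by (intro mult_mono real_sqrt_le_mono sum_le_suminf H2_summable real_sqrt_ge_zero
          suminf_nonneg sum_nonneg) auto
    finally show "(\<Sum>k<n. cmod (taylor_coeff f k * cnj (taylor_coeff g k)))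
      \<le> sqrt (h2_sqnorm f) * sqrt (h2_sqnorm g)" .
  qed
  finally show ?thesis using assms by (simp add: h2_norm_eq_sqrt)
qed

section \<open>Orthonormal lists and orthogonal projection\<close>

lemma sum_list_map_eq_0:
  "(\<And>x. x \<in> set xs \<Longrightarrow> f x = 0) \<Longrightarrow> (\<Sum>x\<leftarrow>xs. f x) = (0::'a::monoid_add)"
  by (induction xs) auto

text \<open>Zero vectors are admitted, so that Gram--Schmidt never has to exclude linear dependence
  of its input.\<close>

fun h2_orthonormal :: "(complex \<Rightarrow> complex) list \<Rightarrow> bool" where
  "h2_orthonormal [] = True"
| "h2_orthonormal (B # Bs) \<longleftrightarrow> h2_orthonormal Bs \<and> B \<in> H2 \<and>
     (h2_sqnorm B = 1 \<or> h2_sqnorm B = 0) \<and> (\<forall>B'\<in>set Bs. h2_inner B B' = 0)"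

lemma h2_orthonormal_in_H2: "h2_orthonormal Bs \<Longrightarrow> B \<in> set Bs \<Longrightarrow> B \<in> H2"
  by (induction Bs) auto

lemma proj_perp_in_H2:
  "(\<And>B. B \<in> set Bs \<Longrightarrow> B \<in> H2) \<Longrightarrow> g \<in> H2 \<Longrightarrow> proj_perp Bs g \<in> H2"
  unfolding proj_perp_def by (intro H2_diff H2_sum_list)

lemma h2_orthonormal_proj_perp_in_H2: "h2_orthonormal Bs \<Longrightarrow> g \<in> H2 \<Longrightarrow> proj_perp Bs g \<in> H2"
  by (intro proj_perp_in_H2) (auto dest: h2_orthonormal_in_H2)

lemma proj_perp_Cons: "proj_perp (B # Bs) g = (\<lambda>z. proj_perp Bs g z - h2_inner g B * B z)"
  unfolding proj_perp_def by (auto simp: algebra_simps)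

lemma proj_perp_rev: "proj_perp (rev Bs) g = proj_perp Bs g"
  unfolding proj_perp_def by (simp add: rev_map[symmetric] sum_list_rev)

lemma h2_inner_proj_perp_left:
  assumes "\<And>B. B \<in> set Bs \<Longrightarrow> B \<in> H2" "g \<in> H2" "h \<in> H2"
  shows "h2_inner (proj_perp Bs g) h = h2_inner g h - (\<Sum>B\<leftarrow>Bs. h2_inner g B * h2_inner B h)"
  unfolding proj_perp_def using assms
  by (subst h2_inner_diff_left) (auto intro!: H2_sum_list simp: h2_inner_sum_list_left)

lemma h2_inner_proj_perp_right:
  assumes "\<And>B. B \<in> set Bs \<Longrightarrow> B \<in> H2" "g \<in> H2" "h \<in> H2"
  shows "h2_inner h (proj_perp Bs g) = h2_inner h g - (\<Sum>B\<leftarrow>Bs. cnj (h2_inner g B) * h2_inner h B)"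
  unfolding proj_perp_def using assms
  by (subst h2_inner_diff_right) (auto intro!: H2_sum_list simp: h2_inner_sum_list_right)

lemma h2_inner_proj_perp_orthogonal:
  assumes "h2_orthonormal Bs" "g \<in> H2" "B' \<in> set Bs"
  shows "h2_inner (proj_perp Bs g) B' = 0"
  using assms
proof (induction Bs arbitrary: B')
  case (Cons B Bs)
  have H: "\<And>C. C \<in> set (B # Bs) \<Longrightarrow> C \<in> H2" using h2_orthonormal_in_H2[OF Cons.prems(1)] .
  have step: "h2_inner (proj_perp (B # Bs) g) B' =
      h2_inner (proj_perp Bs g) B' - h2_inner g B * h2_inner B B'"
    unfolding proj_perp_Cons using H Cons.prems
    by (subst h2_inner_diff_left) (auto intro!: H2_cmult proj_perp_in_H2 simp: h2_inner_cmult_left)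
  show ?case
  proof (cases "B' \<in> set Bs")
    case True
    then show ?thesis using step Cons by (auto simp: h2_inner_commute[of B' B] H)
  next
    case False
    hence B': "B' = B" using Cons.prems by auto
    have "(\<Sum>C\<leftarrow>Bs. h2_inner g C * h2_inner C B) = 0"
      using Cons.prems H by (intro sum_list_map_eq_0) (auto simp: h2_inner_commute[of B])
    hence "h2_inner (proj_perp Bs g) B = h2_inner g B"
      using H Cons.prems by (simp add: h2_inner_proj_perp_left)
    moreover have "h2_inner B B = 1 \<or> h2_sqnorm B = 0"
      using Cons.prems H by (auto simp: h2_inner_self)
    ultimately show ?thesis
      using step B' h2_inner_null_right[of B] H by auto
  qed
qed simp

lemma proj_perp_self_adjoint:
  assumes "\<And>B. B \<in> set Bs \<Longrightarrow> B \<in> H2" "g \<in> H2" "h \<in> H2"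
  shows "h2_inner (proj_perp Bs g) h = h2_inner g (proj_perp Bs h)"
proof -
  have "(\<Sum>B\<leftarrow>Bs. h2_inner g B * h2_inner B h) = (\<Sum>B\<leftarrow>Bs. cnj (h2_inner h B) * h2_inner g B)"
    using assms by (intro arg_cong[of _ _ sum_list] map_cong) (auto simp: h2_inner_commute[of h])
  thus ?thesis using assms by (simp add: h2_inner_proj_perp_left h2_inner_proj_perp_right)
qed

lemma h2_inner_proj_perp_of_orthogonal:
  assumes "\<And>B. B \<in> set Bs \<Longrightarrow> B \<in> H2" "x \<in> H2" "h \<in> H2"
    and "\<And>B. B \<in> set Bs \<Longrightarrow> h2_inner x B = 0"
  shows "h2_inner (proj_perp Bs h) x = h2_inner h x" "h2_inner x (proj_perp Bs h) = h2_inner x h"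
proof -
  have "(\<Sum>B\<leftarrow>Bs. h2_inner h B * h2_inner B x) = 0"
    using assms by (intro sum_list_map_eq_0) (auto simp: h2_inner_commute[of x])
  thus "h2_inner (proj_perp Bs h) x = h2_inner h x" using assms by (simp add: h2_inner_proj_perp_left)
  have "(\<Sum>B\<leftarrow>Bs. cnj (h2_inner h B) * h2_inner x B) = 0"
    using assms by (intro sum_list_map_eq_0) auto
  thus "h2_inner x (proj_perp Bs h) = h2_inner x h" using assms by (simp add: h2_inner_proj_perp_right)
qed

lemma h2_inner_proj_perp_idem:
  assumes "h2_orthonormal Bs" "g \<in> H2" "h \<in> H2"
  shows "h2_inner (proj_perp Bs g) (proj_perp Bs h) = h2_inner (proj_perp Bs g) h"
  using assms h2_orthonormal_in_H2[OF assms(1)]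
  by (intro h2_inner_proj_perp_of_orthogonal(2) proj_perp_in_H2 h2_inner_proj_perp_orthogonal) auto

lemma h2_sqnorm_proj_perp:
  assumes "h2_orthonormal Bs" "g \<in> H2"
  shows "h2_sqnorm (proj_perp Bs g) = h2_sqnorm g - (\<Sum>B\<leftarrow>Bs. (cmod (h2_inner g B))\<^sup>2)"
proof -
  have H: "\<And>B. B \<in> set Bs \<Longrightarrow> B \<in> H2" using h2_orthonormal_in_H2 assms(1) .
  have "of_real (h2_sqnorm (proj_perp Bs g)) = h2_inner (proj_perp Bs g) g"
    using assms H by (simp add: h2_inner_self[symmetric] proj_perp_in_H2 h2_inner_proj_perp_idem)
  also have "\<dots> = h2_inner g g - (\<Sum>B\<leftarrow>Bs. h2_inner g B * h2_inner B g)"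
    using H assms by (intro h2_inner_proj_perp_left) auto
  also have "(\<Sum>B\<leftarrow>Bs. h2_inner g B * h2_inner B g) = of_real (\<Sum>B\<leftarrow>Bs. (cmod (h2_inner g B))\<^sup>2)"
    using H assms(2) by (induction Bs)
      (auto simp: h2_inner_commute[of g] complex_norm_square simp del: of_real_power)
  finally have "of_real (h2_sqnorm (proj_perp Bs g)) =
      (of_real (h2_sqnorm g - (\<Sum>B\<leftarrow>Bs. (cmod (h2_inner g B))\<^sup>2)) :: complex)"
    using assms by (simp add: h2_inner_self)
  thus ?thesis by (simp only: of_real_eq_iff)
qed

lemma proj_perp_cdiv:
  assumes "\<And>B. B \<in> set Bs \<Longrightarrow> B \<in> H2" "v \<in> H2"
  shows "proj_perp Bs (\<lambda>z. v z / c) = (\<lambda>z. proj_perp Bs v z / c)"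
proof
  fix z
  have "(\<Sum>B\<leftarrow>Bs. h2_inner (\<lambda>z. v z / c) B * B z) = (\<Sum>B\<leftarrow>Bs. h2_inner v B * B z / c)"
    using assms by (intro arg_cong[of _ _ sum_list] map_cong) (auto simp: h2_inner_cdiv_left)
  also have "\<dots> = (\<Sum>B\<leftarrow>Bs. h2_inner v B * B z) / c"
    by (induction Bs) (auto simp: add_divide_distrib)
  finally show "proj_perp Bs (\<lambda>z. v z / c) z = proj_perp Bs v z / c"
    unfolding proj_perp_def by (simp add: diff_divide_distrib)
qed

lemma h2_normalize_in_H2: "v \<in> H2 \<Longrightarrow> h2_normalize v \<in> H2"
  unfolding h2_normalize_def by (rule H2_cdiv)

lemma h2_normalize_null: "v \<in> H2 \<Longrightarrow> h2_sqnorm v = 0 \<Longrightarrow> h2_normalize v = (\<lambda>z. 0)"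
  unfolding h2_normalize_def using h2_norm_eq_0_iff[of v] by simp

lemma h2_sqnorm_cdiv: "v \<in> H2 \<Longrightarrow> h2_sqnorm (\<lambda>z. v z / c) = h2_sqnorm v / (cmod c)\<^sup>2"
proof -
  assume v: "v \<in> H2"
  have "of_real (h2_sqnorm (\<lambda>z. v z / c)) = h2_inner v v / (c * cnj c)"
    using v H2_cdiv[OF v] by (simp add: h2_inner_self[symmetric] h2_inner_cdiv_left h2_inner_cdiv_right)
  also have "\<dots> = of_real (h2_sqnorm v / (cmod c)\<^sup>2)"
    using v by (simp add: h2_inner_self complex_norm_square[symmetric] del: of_real_power)
  finally show ?thesis by (simp only: of_real_eq_iff)
qed

lemma h2_sqnorm_normalize: "v \<in> H2 \<Longrightarrow> h2_sqnorm v \<noteq> 0 \<Longrightarrow> h2_sqnorm (h2_normalize v) = 1"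
  unfolding h2_normalize_def
  by (simp add: h2_sqnorm_cdiv h2_norm_power2 h2_norm_eq_0_iff[symmetric] del: of_real_power)

lemma h2_normalize_cdiv:
  assumes v: "v \<in> H2" and c: "c > 0"
  shows "h2_normalize (\<lambda>z. v z / of_real c) = h2_normalize v"
proof -
  have "h2_norm (\<lambda>z. v z / of_real c) = h2_norm v / c"
    using v c H2_cdiv[OF v] by (simp add: h2_norm_eq_sqrt h2_sqnorm_cdiv real_sqrt_divide)
  hence "h2_normalize (\<lambda>z. v z / of_real c) = (\<lambda>z. v z / of_real c / of_real (h2_norm v / c))"
    unfolding h2_normalize_def by simp
  also have "\<dots> = h2_normalize v"
    unfolding h2_normalize_def using c by (cases "h2_norm v = 0") (auto simp: field_simps)
  finally show ?thesis .
qed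

lemma h2_inner_normalize_right:
  "f \<in> H2 \<Longrightarrow> v \<in> H2 \<Longrightarrow> h2_inner f (h2_normalize v) = h2_inner f v / of_real (h2_norm v)"
  unfolding h2_normalize_def by (simp add: h2_inner_cdiv_right)

lemma norm_h2_inner_normalize_le:
  assumes "f \<in> H2" "v \<in> H2"
  shows "cmod (h2_inner f (h2_normalize v)) \<le> h2_norm f"
proof -
  have "cmod (h2_inner f v) / h2_norm v \<le> h2_norm f"
    using h2_cauchy_schwarz[OF assms] assms h2_norm_nonneg[of v] h2_norm_nonneg[of f]
    by (cases "h2_norm v = 0") (auto simp: field_simps)
  thus ?thesis using assms by (simp add: h2_inner_normalize_right norm_divide h2_norm_nonneg)
qed

section \<open>The kernels\<close>

lemma kern_holomorphic_on_larger_ball: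
  assumes a: "cmod a < 1"
  obtains R where "R > 1" "kern n a holomorphic_on ball 0 R"
proof
  define R where "R = (if a = 0 then 2 else 1 / cmod a)"
  show "R > 1" using a by (auto simp: R_def field_simps)
  have "cmod (cnj a * z) < 1" if z: "z \<in> ball 0 R" for z
  proof (cases "a = 0")
    case False
    hence "cmod a * cmod z < 1" using z by (simp add: R_def field_simps)
    thus ?thesis by (simp add: norm_mult)
  qed simp
  hence "1 - cnj a * z \<noteq> 0" if "z \<in> ball 0 R" for z
    using that by (metis norm_one order_less_irrefl right_minus_eq)
  thus "kern n a holomorphic_on ball 0 R"
    unfolding kern_def by (intro holomorphic_intros) auto
qed

lemma kern_in_H2: "cmod a < 1 \<Longrightarrow> kern n a \<in> H2"
  by (metis kern_holomorphic_on_larger_ball holomorphic_on_ball_in_H2)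

lemma ekern_in_H2: "cmod a < 1 \<Longrightarrow> ekern n a \<in> H2"
  unfolding ekern_def by (intro H2_cdiv kern_in_H2)

lemma has_field_derivative_divide_one_minus_power:
  assumes "w \<noteq> 1"
  shows "((\<lambda>w::complex. c / (1 - w) ^ q) has_field_derivative c * of_nat q / (1 - w) ^ Suc q) (at w)"
proof -
  have nz: "1 - w \<noteq> 0" using assms by auto
  have "((\<lambda>w::complex. c / (1 - w) ^ q) has_field_derivative
      - (c * (of_nat q * (1 - w) ^ (q - 1) * (0 - 1))) / ((1 - w) ^ q * (1 - w) ^ q)) (at w)"
    using nz by (auto intro!: derivative_eq_intros)
  also have "- (c * (of_nat q * (1 - w) ^ (q - 1) * (0 - 1))) / ((1 - w) ^ q * (1 - w) ^ q)
      = c * of_nat q / (1 - w) ^ Suc q"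
    using nz by (cases q) (simp_all add: divide_simps power_add[symmetric])
  finally show ?thesis .
qed

lemma higher_deriv_inverse_one_minus_power:
  "w \<in> ball 0 1 \<Longrightarrow>
   (deriv ^^ j) (\<lambda>w::complex. 1 / (1 - w) ^ m) w = pochhammer (of_nat m) j / (1 - w) ^ (m + j)"
proof (induction j arbitrary: w)
  case (Suc j)
  have "eventually (\<lambda>x. x \<in> ball 0 1) (nhds w)"
    using Suc.prems by (intro eventually_nhds_in_open) auto
  hence "(deriv ^^ Suc j) (\<lambda>w::complex. 1 / (1 - w) ^ m) w
      = deriv (\<lambda>x. pochhammer (of_nat m) j / (1 - x) ^ (m + j)) w"
    by (simp, intro deriv_cong_ev) (auto elim!: eventually_mono simp: Suc.IH)
  also have "\<dots> = pochhammer (of_nat m) j * of_nat (m + j) / (1 - w) ^ Suc (m + j)"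
    by (rule DERIV_imp_deriv has_field_derivative_divide_one_minus_power)+ (use Suc.prems in auto)
  also have "\<dots> = pochhammer (of_nat m) (Suc j) / (1 - w) ^ (m + Suc j)"
    by (simp add: pochhammer_Suc)
  finally show ?case .
qed simp

lemma inverse_one_minus_power_sums:
  assumes "cmod w < 1"
  shows "(\<lambda>j. pochhammer (of_nat m) j / fact j * w ^ j) sums (1 / (1 - w) ^ m)"
proof -
  have "(\<lambda>w::complex. 1 / (1 - w) ^ m) holomorphic_on ball 0 1"
    by (intro holomorphic_intros) auto
  from holomorphic_power_series[OF this, of w] show ?thesis
    using assms by (simp add: higher_deriv_inverse_one_minus_power)
qed

definition kern_coeff :: "nat \<Rightarrow> complex \<Rightarrow> nat \<Rightarrow> complex" where
  "kern_coeff n a k = (if n \<le> k then of_nat (fact k) / of_nat (fact (k - n)) * cnj a ^ (k - n) else 0)"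

lemma fact_add_eq_fact_mult_pochhammer:
  "(fact (j + n) :: 'a::{semiring_char_0, comm_semiring_1}) = fact n * pochhammer (of_nat (Suc n)) j"
proof -
  have "(fact (n + j) :: 'a) = pochhammer 1 n * pochhammer (1 + of_nat n) j"
    by (simp add: pochhammer_fact pochhammer_product')
  thus ?thesis by (simp add: pochhammer_fact add.commute)
qed

lemma kern_sums:
  assumes a: "cmod a < 1" and z: "z \<in> ball 0 1"
  shows "(\<lambda>k. kern_coeff n a k * z ^ k) sums kern n a z"
proof -
  define w where "w = cnj a * z"
  have "cmod w < 1 * 1"
    unfolding w_def norm_mult using a z by (intro mult_strict_mono') auto
  hence "(\<lambda>j. (fact n * z ^ n) * (pochhammer (of_nat (Suc n)) j / fact j * w ^ j)) sums
      ((fact n * z ^ n) * (1 / (1 - w) ^ Suc n))"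
    by (intro sums_mult inverse_one_minus_power_sums) simp
  moreover have "(fact n * z ^ n) * (pochhammer (of_nat (Suc n)) j / fact j * w ^ j) =
      kern_coeff n a (j + n) * z ^ (j + n)" for j
    unfolding kern_coeff_def w_def
    by (simp add: fact_add_eq_fact_mult_pochhammer[where 'a=complex] power_add power_mult_distrib field_simps)
  ultimately have "(\<lambda>j. kern_coeff n a (j + n) * z ^ (j + n)) sums kern n a z"
    by (simp add: kern_def w_def)
  thus ?thesis by (subst (asm) sums_zero_iff_shift) (auto simp: kern_coeff_def)
qed

lemma taylor_coeff_kern: "cmod a < 1 \<Longrightarrow> taylor_coeff (kern n a) k = kern_coeff n a k"
  by (rule taylor_coeff_eqI[of 1]) (auto intro: kern_sums)

lemma h2_inner_kern:
  assumes h: "h \<in> H2" and a: "cmod a < 1"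
  shows "h2_inner h (kern n a) = (deriv ^^ n) h a"
proof -
  have "(deriv ^^ n) h holomorphic_on ball 0 1"
    using H2_holomorphic[OF h] by (intro holomorphic_higher_deriv) auto
  from holomorphic_power_series[OF this, of a]
  have "(\<lambda>i. (deriv ^^ (i + n)) h 0 / fact i * a ^ i) sums (deriv ^^ n) h a"
    using a by (simp add: funpow_add)
  moreover have "(deriv ^^ (i + n)) h 0 / fact i * a ^ i =
      taylor_coeff h (i + n) * cnj (kern_coeff n a (i + n))" for i
    by (simp add: taylor_coeff_def kern_coeff_def)
  ultimately have "(\<lambda>i. taylor_coeff h (i + n) * cnj (kern_coeff n a (i + n))) sums (deriv ^^ n) h a"
    by simp
  hence "(\<lambda>k. taylor_coeff h k * cnj (kern_coeff n a k)) sums (deriv ^^ n) h a"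
    by (subst (asm) sums_zero_iff_shift) (auto simp: kern_coeff_def)
  thus ?thesis unfolding h2_inner_def using taylor_coeff_kern[OF a] by (simp add: sums_iff)
qed

lemma fact_mult_fact_le_fact_add: "fact m * fact n \<le> (fact (m + n) :: nat)"
proof -
  have "fact m * fact n * ((m + n) choose m) = fact (m + n)"
    using binomial_fact_lemma[of m "m + n"] by (simp add: mult.commute)
  moreover have "(m + n) choose m \<ge> 1" by (simp add: Suc_leI)
  ultimately show ?thesis by (metis mult.right_neutral mult_le_mono2)
qed

lemma h2_sqnorm_kern_ge:
  assumes a: "cmod a < 1"
  shows "(fact n)\<^sup>2 / (1 - (cmod a)\<^sup>2) \<le> h2_sqnorm (kern n a)"
proof -
  let ?g = "\<lambda>k. (cmod (kern_coeff n a k))\<^sup>2"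
  have "summable ?g" using H2_summable[OF kern_in_H2[OF a]] by (simp add: taylor_coeff_kern a)
  hence "?g sums h2_sqnorm (kern n a)" by (simp add: h2_sqnorm_def taylor_coeff_kern a sums_iff)
  hence shift: "(\<lambda>i. ?g (i + n)) sums h2_sqnorm (kern n a)"
    by (subst sums_zero_iff_shift) (auto simp: kern_coeff_def)
  have geom: "(\<lambda>i. (fact n)\<^sup>2 * ((cmod a)\<^sup>2) ^ i) sums ((fact n)\<^sup>2 * (1 / (1 - (cmod a)\<^sup>2)))"
    using a by (intro sums_mult geometric_sums) (simp add: abs_square_less_1)
  have le: "(fact n)\<^sup>2 * ((cmod a)\<^sup>2) ^ i \<le> ?g (i + n)" for i
  proof -
    have "real (fact i * fact n) \<le> real (fact (i + n))"
      by (simp only: of_nat_le_iff fact_mult_fact_le_fact_add)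
    hence "fact n \<le> real (fact (i + n)) / real (fact i)"
      by (simp add: field_simps)
    hence "fact n * cmod a ^ i \<le> real (fact (i + n)) / real (fact i) * cmod a ^ i"
      by (intro mult_right_mono) auto
    hence "(fact n * cmod a ^ i)\<^sup>2 \<le> ?g (i + n)"
      by (intro power_mono) (auto simp: kern_coeff_def norm_mult norm_divide norm_power)
    thus ?thesis by (simp add: power_mult_distrib power_mult[symmetric] mult.commute)
  qed
  show ?thesis using sums_le[OF le geom shift] by simp
qed

lemma norm_kern_coeff_le: "cmod a < 1 \<Longrightarrow> cmod (kern_coeff n a k) \<le> fact k"
proof (cases "n \<le> k")
  case True
  assume a: "cmod a < 1"
  have "cmod (kern_coeff n a k) = real (fact k) / real (fact (k - n)) * cmod a ^ (k - n)"
    using True by (simp add: kern_coeff_def norm_mult norm_divide norm_power)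
  also have "\<dots> \<le> real (fact k) / 1 * 1"
    using a by (intro mult_mono divide_left_mono power_le_one) (auto simp: fact_ge_1)
  finally show ?thesis by simp
qed (simp add: kern_coeff_def)

lemma h2_norm_kern_pos: "cmod a < 1 \<Longrightarrow> 0 < h2_norm (kern n a)"
proof -
  assume a: "cmod a < 1"
  have "0 < (fact n)\<^sup>2 / (1 - (cmod a)\<^sup>2)"
    using a by (intro divide_pos_pos) (auto simp: abs_square_less_1)
  also have "\<dots> \<le> h2_sqnorm (kern n a)" by (rule h2_sqnorm_kern_ge[OF a])
  finally show ?thesis using kern_in_H2[OF a] by (simp add: h2_norm_pos_iff)
qed

lemma ekern_eq_normalize: "ekern n a = h2_normalize (kern n a)"
  by (simp add: ekern_def h2_normalize_def)

lemma h2_norm_ekern: "cmod a < 1 \<Longrightarrow> h2_norm (ekern n a) = 1"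
  using h2_norm_kern_pos[of a n] kern_in_H2[of a n]
  by (simp add: ekern_eq_normalize h2_norm_eq_sqrt h2_sqnorm_normalize h2_normalize_in_H2 h2_norm_pos_iff)

lemma h2_sqnorm_ekern: "cmod a < 1 \<Longrightarrow> h2_sqnorm (ekern n a) = 1"
  using h2_norm_kern_pos[of a n] kern_in_H2[of a n]
  by (simp add: ekern_eq_normalize h2_sqnorm_normalize h2_norm_pos_iff)

lemma proj_perp_ekern:
  assumes "h2_orthonormal Bs" "cmod a < 1"
  shows "proj_perp Bs (ekern n a) = (\<lambda>z. proj_perp Bs (kern n a) z / of_real (h2_norm (kern n a)))"
  unfolding ekern_def using assms h2_orthonormal_in_H2 kern_in_H2 by (intro proj_perp_cdiv) auto

lemma h2_sqnorm_proj_perp_ekern_eq_0_iff: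
  assumes "h2_orthonormal Bs" "cmod a < 1"
  shows "h2_sqnorm (proj_perp Bs (ekern n a)) = 0 \<longleftrightarrow> h2_sqnorm (proj_perp Bs (kern n a)) = 0"
  using assms h2_norm_kern_pos[OF assms(2), of n] h2_orthonormal_in_H2[OF assms(1)]
  by (simp add: proj_perp_ekern h2_sqnorm_cdiv proj_perp_in_H2 kern_in_H2)

lemma h2_normalize_proj_perp_ekern:
  assumes "h2_orthonormal Bs" "cmod a < 1"
  shows "h2_normalize (proj_perp Bs (ekern n a)) = h2_normalize (proj_perp Bs (kern n a))"
  using assms h2_norm_kern_pos[OF assms(2), of n] h2_orthonormal_in_H2[OF assms(1)]
  by (simp add: proj_perp_ekern h2_normalize_cdiv proj_perp_in_H2 kern_in_H2)

section \<open>Gram--Schmidt\<close>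

lemma h2_orthonormal_Cons_normalize_proj_perp:
  assumes ON: "h2_orthonormal Bs" and e: "e \<in> H2"
  shows "h2_orthonormal (h2_normalize (proj_perp Bs e) # Bs)"
proof -
  have H: "\<And>B. B \<in> set Bs \<Longrightarrow> B \<in> H2" using h2_orthonormal_in_H2[OF ON] .
  define v where "v = proj_perp Bs e"
  have v: "v \<in> H2" unfolding v_def using H e by (rule proj_perp_in_H2)
  have "h2_inner (h2_normalize v) B = 0" if "B \<in> set Bs" for B
    using h2_inner_proj_perp_orthogonal[OF ON e that] v H[OF that]
    by (simp add: v_def h2_normalize_def h2_inner_cdiv_left)
  moreover have "h2_sqnorm (h2_normalize v) = 1 \<or> h2_sqnorm (h2_normalize v) = 0"
    using v by (cases "h2_sqnorm v = 0") (auto simp: h2_normalize_null h2_sqnorm_normalize)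
  ultimately show ?thesis using ON v by (simp add: h2_normalize_in_H2 v_def)
qed

lemma h2_sqnorm_proj_perp_Cons_normalize_self:
  assumes ON: "h2_orthonormal Bs" and e: "e \<in> H2"
  shows "h2_sqnorm (proj_perp (h2_normalize (proj_perp Bs e) # Bs) e) = 0"
proof -
  have H: "\<And>B. B \<in> set Bs \<Longrightarrow> B \<in> H2" using h2_orthonormal_in_H2[OF ON] .
  define v where "v = proj_perp Bs e"
  have v: "v \<in> H2" unfolding v_def using H e by (rule proj_perp_in_H2)
  show ?thesis
  proof (cases "h2_sqnorm v = 0")
    case True
    then show ?thesis using v by (simp add: proj_perp_Cons h2_normalize_null flip: v_def)
  next
    case False
    let ?c = "h2_norm v"
    have c: "?c \<noteq> 0" "?c\<^sup>2 = h2_sqnorm v"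
      using False v by (auto simp: h2_norm_eq_0_iff h2_norm_power2)
    have "h2_inner e v = h2_inner v v"
      unfolding v_def using proj_perp_self_adjoint[OF H e e] h2_inner_proj_perp_idem[OF ON e e] by simp
    hence "h2_inner e (h2_normalize v) = of_real ?c"
      using v e c by (simp add: h2_inner_normalize_right h2_inner_self power2_eq_square
          del: of_real_power flip: c(2))
    hence "proj_perp (h2_normalize v # Bs) e = (\<lambda>z. 0)"
      using c(1) by (auto simp: proj_perp_Cons h2_normalize_def v_def)
    thus ?thesis by (simp add: v_def)
  qed
qed

lemma h2_sqnorm_proj_perp_Cons_normalize:
  assumes ON: "h2_orthonormal Bs" and e: "e \<in> H2" and w: "w \<in> H2"
    and null: "h2_sqnorm (proj_perp Bs w) = 0"
  shows "h2_sqnorm (proj_perp (h2_normalize (proj_perp Bs e) # Bs) w) = 0"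
proof -
  have H: "\<And>B. B \<in> set Bs \<Longrightarrow> B \<in> H2" using h2_orthonormal_in_H2[OF ON] .
  have "h2_inner w (proj_perp Bs e) = h2_inner (proj_perp Bs w) e"
    using proj_perp_self_adjoint[OF H w e] by simp
  also have "\<dots> = 0" using h2_inner_null_left[OF h2_orthonormal_proj_perp_in_H2[OF ON w] null] .
  finally have "h2_inner w (h2_normalize (proj_perp Bs e)) = 0"
    using H e w by (simp add: h2_inner_normalize_right proj_perp_in_H2)
  thus ?thesis using null by (simp add: proj_perp_Cons)
qed

lemma gs_rev_orthonormal:
  assumes "\<forall>p\<in>set L. cmod (snd p) < 1"
  shows "h2_orthonormal (gs_rev L) \<and>
    (\<forall>p\<in>set L. h2_sqnorm (proj_perp (gs_rev L) (ekern (fst p) (snd p))) = 0)"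
  using assms
proof (induction L)
  case (Cons p L)
  have "\<And>q. q \<in> set (p # L) \<Longrightarrow> ekern (fst q) (snd q) \<in> H2"
    using Cons.prems ekern_in_H2 by auto
  then show ?case
    using Cons h2_orthonormal_Cons_normalize_proj_perp h2_sqnorm_proj_perp_Cons_normalize_self
      h2_sqnorm_proj_perp_Cons_normalize
    by (auto simp: Let_def)
qed simp

section \<open>Weak convergence of the normalised kernels\<close>

definition at_boundary :: "(nat \<times> complex) filter" where
  "at_boundary = inf (sup (filtercomap fst at_top) (filtercomap (\<lambda>p. cmod (snd p)) (at_left 1)))
     (principal {p. cmod (snd p) < 1})"

lemma eventually_at_boundary:
  "eventually P at_boundary \<longleftrightarrow>
     (\<exists>N r. r < 1 \<and> (\<forall>n a. cmod a < 1 \<and> (N \<le> n \<or> r < cmod a) \<longrightarrow> P (n, a)))"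
  unfolding at_boundary_def eventually_inf_principal eventually_sup eventually_filtercomap
    eventually_at_top_linorder eventually_at_left_field
proof safe
  fix Q1 Q2 N r
  assume "\<forall>n\<ge>N. Q1 n" "\<forall>p. Q1 (fst p) \<longrightarrow> p \<in> {p. cmod (snd p) < 1} \<longrightarrow> P p"
    "r < 1" "\<forall>t>r. t < 1 \<longrightarrow> Q2 t"
    "\<forall>p. Q2 (cmod (snd p)) \<longrightarrow> p \<in> {p. cmod (snd p) < 1} \<longrightarrow> P p"
  then show "\<exists>N r. r < 1 \<and> (\<forall>n a. cmod a < 1 \<and> (N \<le> n \<or> r < cmod a) \<longrightarrow> P (n, a))"
    by (metis fst_conv snd_conv mem_Collect_eq)
next
  fix N and r :: real
  assume "r < 1" "\<forall>n a. cmod a < 1 \<and> (N \<le> n \<or> r < cmod a) \<longrightarrow> P (n, a)"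
  then show "\<exists>Q. (\<exists>N. \<forall>n\<ge>N. Q n) \<and> (\<forall>p. Q (fst p) \<longrightarrow> p \<in> {p. cmod (snd p) < 1} \<longrightarrow> P p)"
    "\<exists>Q. (\<exists>b<1. \<forall>t>b. t < 1 \<longrightarrow> Q t) \<and>
      (\<forall>p. Q (cmod (snd p)) \<longrightarrow> p \<in> {p. cmod (snd p) < 1} \<longrightarrow> P p)"
    by (auto intro!: exI[of _ "\<lambda>n. N \<le> n"] exI[of _ "\<lambda>t. r < t"])
qed

lemma eventually_in_disc_at_boundary: "eventually (\<lambda>(n, a). cmod a < 1) at_boundary"
  unfolding eventually_at_boundary by (intro exI[of _ 0] exI[of _ 0]) auto

lemma filterlim_h2_sqnorm_kern_at_boundary:
  "filterlim (\<lambda>(n, a). h2_sqnorm (kern n a)) at_top at_boundary"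
  unfolding filterlim_at_top eventually_at_boundary
proof
  fix C :: real
  define r where "r = sqrt (1 - 1 / (\<bar>C\<bar> + 1))"
  have c: "0 < \<bar>C\<bar> + 1" by simp
  hence "1 / (\<bar>C\<bar> + 1) \<le> 1" "0 < 1 / (\<bar>C\<bar> + 1)" by (simp_all add: divide_le_eq)
  hence r: "0 \<le> r" "r < 1" "r\<^sup>2 = 1 - 1 / (\<bar>C\<bar> + 1)" by (auto simp: r_def)
  have "C \<le> h2_sqnorm (kern n a)" if a: "cmod a < 1" and na: "nat \<lceil>C\<rceil> \<le> n \<or> r < cmod a" for n a
  proof -
    let ?d = "1 - (cmod a)\<^sup>2"
    have d: "0 < ?d" "?d \<le> 1" using a by (auto simp: abs_square_less_1)
    have "(fact n)\<^sup>2 \<le> (fact n)\<^sup>2 / ?d" using d by (simp add: le_divide_eq)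
    also have "\<dots> \<le> h2_sqnorm (kern n a)" by (rule h2_sqnorm_kern_ge[OF a])
    finally have fact_le: "(fact n)\<^sup>2 \<le> h2_sqnorm (kern n a)" .
    show ?thesis
      using na
    proof
      assume "nat \<lceil>C\<rceil> \<le> n"
      hence "C \<le> real n" by linarith
      also have "\<dots> \<le> fact n" by (metis fact_ge_self of_nat_fact of_nat_le_iff)
      also have "\<dots> \<le> (fact n)\<^sup>2" by (simp add: power2_eq_square fact_ge_1)
      finally show ?thesis using fact_le by linarith
    next
      assume "r < cmod a"
      hence "r\<^sup>2 < (cmod a)\<^sup>2" by (intro power_strict_mono) (use r in auto)
      hence "?d < 1 / (\<bar>C\<bar> + 1)" using r(3) by linarith
      hence "\<bar>C\<bar> + 1 < 1 / ?d" using c d by (simp add: field_simps)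
      also have "\<dots> \<le> (fact n)\<^sup>2 / ?d"
        using d by (intro divide_right_mono one_le_power) (auto simp: fact_ge_1)
      also have "\<dots> \<le> h2_sqnorm (kern n a)" by (rule h2_sqnorm_kern_ge[OF a])
      finally show ?thesis by linarith
    qed
  qed
  thus "\<exists>N r. r < 1 \<and> (\<forall>n a. cmod a < 1 \<and> (N \<le> n \<or> r < cmod a) \<longrightarrow>
      C \<le> (case (n, a) of (n, a) \<Rightarrow> h2_sqnorm (kern n a)))"
    using r(2) by (intro exI[of _ "nat \<lceil>C\<rceil>"] exI[of _ r]) auto
qed

lemma filterlim_h2_norm_kern_at_boundary:
  "filterlim (\<lambda>(n, a). h2_norm (kern n a)) at_top at_boundary"
proof -
  have "eventually (\<lambda>x. sqrt (case x of (n, a) \<Rightarrow> h2_sqnorm (kern n a)) =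
      (case x of (n, a) \<Rightarrow> h2_norm (kern n a))) at_boundary"
    using eventually_in_disc_at_boundary by eventually_elim (auto simp: h2_norm_eq_sqrt kern_in_H2)
  from filterlim_cong[OF refl refl this]
  show ?thesis using filterlim_compose[OF sqrt_at_top filterlim_h2_sqnorm_kern_at_boundary] by simp
qed

lemma norm_h2_inner_kern_le:
  assumes p: "\<And>k. K \<le> k \<Longrightarrow> taylor_coeff p k = 0" and a: "cmod a < 1"
  shows "cmod (h2_inner p (kern n a)) \<le> (\<Sum>k<K. cmod (taylor_coeff p k) * fact k)"
proof -
  have "h2_inner p (kern n a) = (\<Sum>k<K. taylor_coeff p k * cnj (kern_coeff n a k))"
    unfolding h2_inner_def taylor_coeff_kern[OF a] by (subst suminf_finite[of "{..<K}"]) (auto simp: p)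
  also have "cmod \<dots> \<le> (\<Sum>k<K. cmod (taylor_coeff p k) * fact k)"
    by (intro sum_norm_le) (auto simp: norm_mult intro!: mult_left_mono norm_kern_coeff_le a)
  finally show ?thesis .
qed

lemma h2_inner_ekern_tendsto_0_if_polynomial:
  assumes p: "p \<in> H2" "\<And>k. K \<le> k \<Longrightarrow> taylor_coeff p k = 0"
  shows "((\<lambda>(n, a). h2_inner p (ekern n a)) \<longlongrightarrow> 0) at_boundary"
proof (rule Lim_null_comparison)
  let ?C = "\<Sum>k<K. cmod (taylor_coeff p k) * fact k"
  show "eventually (\<lambda>x. cmod (case x of (n, a) \<Rightarrow> h2_inner p (ekern n a))
      \<le> (case x of (n, a) \<Rightarrow> ?C / h2_norm (kern n a))) at_boundary"
    using eventually_in_disc_at_boundary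
  proof eventually_elim
    case (elim x)
    obtain n a where x: "x = (n, a)" and a: "cmod a < 1" using elim by auto
    show ?case
      using norm_h2_inner_kern_le[of K p a n, OF p(2) a] h2_norm_kern_pos[OF a, of n] p(1) a
      by (simp add: x ekern_def h2_inner_cdiv_right kern_in_H2 norm_divide divide_right_mono)
  qed
  show "((\<lambda>(n, a). ?C / h2_norm (kern n a)) \<longlongrightarrow> 0) at_boundary"
    using tendsto_divide_0[OF tendsto_const
        filterlim_at_top_imp_at_infinity[OF filterlim_h2_norm_kern_at_boundary]]
    by (simp add: case_prod_beta')
qed

lemma H2_polynomial_approx:
  assumes h: "h \<in> H2" and \<epsilon>: "\<epsilon> > 0"
  obtains p K where "p \<in> H2" "\<And>k. K \<le> k \<Longrightarrow> taylor_coeff p k = 0" "h2_norm (\<lambda>z. h z - p z) < \<epsilon>"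
proof -
  let ?c = "\<lambda>k. (cmod (taylor_coeff h k))\<^sup>2"
  obtain K where K: "norm (\<Sum>i. ?c (i + K)) < \<epsilon>\<^sup>2"
    using suminf_exist_split[OF _ H2_summable[OF h], of "\<epsilon>\<^sup>2"] \<epsilon> by auto
  define p where "p = (\<lambda>z. \<Sum>k<K. taylor_coeff h k * z ^ k)"
  have p: "p \<in> H2" unfolding p_def by (rule holomorphic_on_ball_in_H2[of 2]) (auto intro!: holomorphic_intros)
  have tc_p: "taylor_coeff p k = (if k < K then taylor_coeff h k else 0)" for k
  proof (rule taylor_coeff_eqI[of 1])
    fix z :: complex
    have "(\<lambda>k. (if k < K then taylor_coeff h k else 0) * z ^ k) sums
        (\<Sum>k<K. (if k < K then taylor_coeff h k else 0) * z ^ k)"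
      by (rule sums_finite) auto
    thus "(\<lambda>k. (if k < K then taylor_coeff h k else 0) * z ^ k) sums p z" by (simp add: p_def)
  qed simp
  have d: "(\<lambda>z. h z - p z) \<in> H2" using h p by (rule H2_diff)
  have "(\<lambda>k. (cmod (taylor_coeff (\<lambda>z. h z - p z) k))\<^sup>2) = (\<lambda>k. if k < K then 0 else ?c k)"
    using h p by (auto simp: taylor_coeff_diff[OF H2_holomorphic H2_holomorphic] tc_p)
  moreover have "(\<lambda>i. ?c (i + K)) sums (\<Sum>i. ?c (i + K))"
    by (rule summable_sums, subst summable_iff_shift) (rule H2_summable[OF h])
  hence "(\<lambda>k. if k < K then 0 else ?c k) sums (\<Sum>i. ?c (i + K))"
    using sums_zero_iff_shift[of K "\<lambda>k. if k < K then 0 else ?c k"] by simp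
  ultimately have "h2_sqnorm (\<lambda>z. h z - p z) < \<epsilon>\<^sup>2"
    using K by (simp add: h2_sqnorm_def sums_iff)
  hence "h2_norm (\<lambda>z. h z - p z) < \<epsilon>"
    using d \<epsilon> by (simp add: h2_norm_eq_sqrt real_less_lsqrt)
  with p tc_p show ?thesis by (intro that[of p K]) auto
qed

lemma h2_inner_ekern_tendsto_0:
  assumes h: "h \<in> H2"
  shows "((\<lambda>(n, a). h2_inner h (ekern n a)) \<longlongrightarrow> 0) at_boundary"
proof (rule tendstoI)
  fix \<epsilon> :: real assume \<epsilon>: "\<epsilon> > 0"
  obtain p K where p: "p \<in> H2" "\<And>k. K \<le> k \<Longrightarrow> taylor_coeff p k = 0"
    and hp: "h2_norm (\<lambda>z. h z - p z) < \<epsilon> / 2"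
    using H2_polynomial_approx[OF h half_gt_zero[OF \<epsilon>]] by blast
  have "eventually (\<lambda>(n, a). cmod (h2_inner p (ekern n a)) < \<epsilon> / 2) at_boundary"
    using tendstoD[OF h2_inner_ekern_tendsto_0_if_polynomial[OF p] half_gt_zero[OF \<epsilon>]]
    by (simp add: case_prod_beta')
  with eventually_in_disc_at_boundary
  show "eventually (\<lambda>x. dist (case x of (n, a) \<Rightarrow> h2_inner h (ekern n a)) 0 < \<epsilon>) at_boundary"
  proof eventually_elim
    case (elim x)
    obtain n a where x: "x = (n, a)" and a: "cmod a < 1" using elim by auto
    have d: "(\<lambda>z. h z - p z) \<in> H2" using h p(1) by (rule H2_diff)
    have "h2_inner h (ekern n a) = h2_inner (\<lambda>z. h z - p z) (ekern n a) + h2_inner p (ekern n a)"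
      using h2_inner_add_left[OF d p(1) ekern_in_H2[OF a]] by simp
    moreover have "cmod (h2_inner (\<lambda>z. h z - p z) (ekern n a)) \<le> h2_norm (\<lambda>z. h z - p z)"
      using h2_cauchy_schwarz[OF d ekern_in_H2[OF a]] h2_norm_ekern[OF a] by simp
    ultimately show ?case
      using elim x hp norm_triangle_ineq[of "h2_inner (\<lambda>z. h z - p z) (ekern n a)" "h2_inner p (ekern n a)"]
      by auto
  qed
qed

lemma tendsto_sum_list:
  fixes f :: "'a \<Rightarrow> 'b \<Rightarrow> 'c::topological_monoid_add"
  assumes "\<And>x. x \<in> set xs \<Longrightarrow> ((\<lambda>y. f x y) \<longlongrightarrow> c x) F"
  shows "((\<lambda>y. \<Sum>x\<leftarrow>xs. f x y) \<longlongrightarrow> (\<Sum>x\<leftarrow>xs. c x)) F"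
  using assms by (induction xs) (auto intro!: tendsto_add)

lemma h2_sqnorm_proj_perp_ekern_tendsto_1:
  assumes ON: "h2_orthonormal Bs"
  shows "((\<lambda>(n, a). h2_sqnorm (proj_perp Bs (ekern n a))) \<longlongrightarrow> 1) at_boundary"
proof (rule Lim_transform_eventually)
  have H: "\<And>B. B \<in> set Bs \<Longrightarrow> B \<in> H2" using h2_orthonormal_in_H2[OF ON] .
  have terms: "((\<lambda>x. (cmod (h2_inner B (ekern (fst x) (snd x))))\<^sup>2) \<longlongrightarrow> 0) at_boundary"
    if "B \<in> set Bs" for B
    using tendsto_power[OF tendsto_norm[OF h2_inner_ekern_tendsto_0[OF H[OF that]]], of 2]
    by (simp add: case_prod_beta')
  have "((\<lambda>x. \<Sum>B\<leftarrow>Bs. (cmod (h2_inner B (ekern (fst x) (snd x))))\<^sup>2) \<longlongrightarrow> 0) at_boundary"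
    using tendsto_sum_list[of Bs _ "\<lambda>_. 0", OF terms] by simp
  from tendsto_diff[OF tendsto_const this, of 1]
  show "((\<lambda>(n, a). 1 - (\<Sum>B\<leftarrow>Bs. (cmod (h2_inner B (ekern n a)))\<^sup>2)) \<longlongrightarrow> 1) at_boundary"
    by (simp add: case_prod_beta')
  show "eventually (\<lambda>x. (case x of (n, a) \<Rightarrow> 1 - (\<Sum>B\<leftarrow>Bs. (cmod (h2_inner B (ekern n a)))\<^sup>2)) =
      (case x of (n, a) \<Rightarrow> h2_sqnorm (proj_perp Bs (ekern n a)))) at_boundary"
    using eventually_in_disc_at_boundary
  proof eventually_elim
    case (elim x)
    obtain n a where x: "x = (n, a)" and a: "cmod a < 1" using elim by auto
    have "(\<Sum>B\<leftarrow>Bs. (cmod (h2_inner B (ekern n a)))\<^sup>2) = (\<Sum>B\<leftarrow>Bs. (cmod (h2_inner (ekern n a) B))\<^sup>2)"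
      using H ekern_in_H2[OF a]
      by (intro arg_cong[of _ _ sum_list] map_cong) (auto simp: h2_inner_commute[of B "ekern n a" for B])
    then show ?case
      using h2_sqnorm_proj_perp[OF ON ekern_in_H2[OF a]] by (simp add: x h2_sqnorm_ekern a)
  qed
qed

lemma h2_inner_normalize_proj_perp_ekern_tendsto_0:
  assumes ON: "h2_orthonormal Bs" and f: "f \<in> H2"
  shows "((\<lambda>(n, a). h2_inner f (h2_normalize (proj_perp Bs (ekern n a)))) \<longlongrightarrow> 0) at_boundary"
proof (rule Lim_transform_eventually)
  have H: "\<And>B. B \<in> set Bs \<Longrightarrow> B \<in> H2" using h2_orthonormal_in_H2[OF ON] .
  have "((\<lambda>(n, a). h2_inner (proj_perp Bs f) (ekern n a) /
      of_real (sqrt (h2_sqnorm (proj_perp Bs (ekern n a))))) \<longlongrightarrow> 0 / of_real (sqrt 1)) at_boundary"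
    using tendsto_divide[OF h2_inner_ekern_tendsto_0[OF h2_orthonormal_proj_perp_in_H2[OF ON f]]
        tendsto_of_real[OF tendsto_real_sqrt[OF h2_sqnorm_proj_perp_ekern_tendsto_1[OF ON]]]]
    by (simp add: case_prod_beta')
  then show "((\<lambda>(n, a). h2_inner (proj_perp Bs f) (ekern n a) /
      of_real (sqrt (h2_sqnorm (proj_perp Bs (ekern n a))))) \<longlongrightarrow> 0) at_boundary"
    by simp
  show "eventually (\<lambda>x. (case x of (n, a) \<Rightarrow> h2_inner (proj_perp Bs f) (ekern n a) /
      of_real (sqrt (h2_sqnorm (proj_perp Bs (ekern n a))))) =
      (case x of (n, a) \<Rightarrow> h2_inner f (h2_normalize (proj_perp Bs (ekern n a))))) at_boundary"
    using eventually_in_disc_at_boundary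
  proof eventually_elim
    case (elim x)
    obtain n a where x: "x = (n, a)" and a: "cmod a < 1" using elim by auto
    show ?case
      using proj_perp_self_adjoint[OF H f ekern_in_H2[OF a]] H f ekern_in_H2[OF a]
      by (simp add: x h2_inner_normalize_right proj_perp_in_H2 h2_norm_eq_sqrt)
  qed
qed

section \<open>Behaviour near a point of the disc\<close>

lemma tendsto_divide_power_higher_deriv:
  assumes F: "F holomorphic_on S" "open S" "b \<in> S"
    and zero: "\<And>i. i < j \<Longrightarrow> (deriv ^^ i) F b = 0"
  shows "((\<lambda>a. F a / (a - b) ^ j) \<longlongrightarrow> (deriv ^^ j) F b / fact j) (at b)"
proof -
  obtain \<rho> where \<rho>: "\<rho> > 0" "ball b \<rho> \<subseteq> S" using F(2,3) openE by blast
  have Fb: "F holomorphic_on ball b \<rho>" using F(1) \<rho>(2) by (rule holomorphic_on_subset)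
  define d where "d i = (deriv ^^ i) F b / fact i" for i
  have ser: "(\<lambda>i. d (i + j) * (a - b) ^ (i + j)) sums F a" if "a \<in> ball b \<rho>" for a
    using holomorphic_power_series[OF Fb that] by (subst sums_zero_iff_shift) (auto simp: d_def zero)
  define P where "P x = (\<Sum>i. d (i + j) * x ^ i)" for x
  define K :: complex where "K = of_real (\<rho> / 2)"
  have K: "cmod K = \<rho> / 2" "K \<noteq> 0" using \<rho> by (auto simp: K_def)
  have "b + K \<in> ball b \<rho>" using K \<rho> by (simp add: dist_norm)
  from summable_divide[OF sums_summable[OF ser[OF this]], of "K ^ j"]
  have "summable (\<lambda>i. d (i + j) * K ^ i)" using K by (simp add: power_add field_simps)
  hence "isCont P 0" unfolding P_def by (rule isCont_powser) (use K \<rho> in simp)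
  moreover have "((\<lambda>a. a - b) \<longlongrightarrow> 0) (at b)"
    using tendsto_diff[OF tendsto_ident_at[of b UNIV] tendsto_const[of b]] by simp
  ultimately have "((\<lambda>a. P (a - b)) \<longlongrightarrow> P 0) (at b)" by (rule isCont_tendsto_compose)
  moreover have "P 0 = d j" using powser_zero[of "\<lambda>i. d (i + j)"] by (simp add: P_def)
  moreover have "eventually (\<lambda>a. P (a - b) = F a / (a - b) ^ j) (at b)"
    unfolding eventually_at
  proof (intro exI[of _ \<rho>] conjI ballI impI \<rho>(1))
    fix a assume "a \<in> UNIV" and a: "a \<noteq> b \<and> dist a b < \<rho>"
    hence "(\<lambda>i. d (i + j) * (a - b) ^ (i + j) / (a - b) ^ j) sums (F a / (a - b) ^ j)"
      by (intro sums_divide ser) (simp add: dist_commute)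
    thus "P (a - b) = F a / (a - b) ^ j"
      using a by (simp add: P_def sums_iff power_add)
  qed
  ultimately show ?thesis unfolding d_def by (simp add: Lim_transform_eventually)
qed

lemma divide_tendsto_higher_deriv_divide:
  assumes holo: "F holomorphic_on S" "G holomorphic_on S" "open S" "b \<in> S"
    and zero: "\<And>i. i < j \<Longrightarrow> (deriv ^^ i) F b = 0" "\<And>i. i < j \<Longrightarrow> (deriv ^^ i) G b = 0"
    and nonzero: "(deriv ^^ j) G b \<noteq> 0"
  shows "eventually (\<lambda>a. G a \<noteq> 0) (at b)"
    and "((\<lambda>a. F a / G a) \<longlongrightarrow> (deriv ^^ j) F b / (deriv ^^ j) G b) (at b)"
proof -
  have limF: "((\<lambda>a. F a / (a - b) ^ j) \<longlongrightarrow> (deriv ^^ j) F b / fact j) (at b)"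
    and limG: "((\<lambda>a. G a / (a - b) ^ j) \<longlongrightarrow> (deriv ^^ j) G b / fact j) (at b)"
    using holo zero by (auto intro: tendsto_divide_power_higher_deriv)
  show "eventually (\<lambda>a. G a \<noteq> 0) (at b)"
    using tendsto_imp_eventually_ne[OF limG, of 0] nonzero by (auto elim: eventually_mono)
  have "((\<lambda>a. (F a / (a - b) ^ j) / (G a / (a - b) ^ j)) \<longlongrightarrow>
      ((deriv ^^ j) F b / fact j) / ((deriv ^^ j) G b / fact j)) (at b)"
    using nonzero by (intro tendsto_divide limF limG) auto
  moreover have "eventually (\<lambda>a. (F a / (a - b) ^ j) / (G a / (a - b) ^ j) = F a / G a) (at b)"
    by (auto simp: eventually_at_filter)
  ultimately show "((\<lambda>a. F a / G a) \<longlongrightarrow> (deriv ^^ j) F b / (deriv ^^ j) G b) (at b)"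
    by (simp add: Lim_transform_eventually)
qed

lemma exists_proj_perp_kern_nonnull:
  assumes ON: "h2_orthonormal Bs" and b: "cmod b < 1"
  obtains m where "n \<le> m" "h2_sqnorm (proj_perp Bs (kern m b)) \<noteq> 0"
proof -
  have "eventually (\<lambda>(m, a). 0 < h2_sqnorm (proj_perp Bs (ekern m a))) at_boundary"
    using order_tendstoD(1)[OF h2_sqnorm_proj_perp_ekern_tendsto_1[OF ON], of 0]
    by (simp add: case_prod_beta')
  then obtain N r where "\<forall>m a. cmod a < 1 \<and> (N \<le> m \<or> r < cmod a) \<longrightarrow>
      0 < h2_sqnorm (proj_perp Bs (ekern m a))"
    unfolding eventually_at_boundary by auto
  hence "0 < h2_sqnorm (proj_perp Bs (ekern (max N n) b))" using b by simp
  then show ?thesis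
    using h2_sqnorm_proj_perp_ekern_eq_0_iff[OF ON b, of "max N n"] by (intro that[of "max N n"]) auto
qed

lemma higher_deriv_eq_h2_inner_proj_perp_kern:
  assumes ON: "h2_orthonormal Bs" and g: "g \<in> H2" "\<And>B. B \<in> set Bs \<Longrightarrow> h2_inner g B = 0"
    and b: "cmod b < 1"
  shows "(deriv ^^ i) ((deriv ^^ n) g) b = h2_inner g (proj_perp Bs (kern (n + i) b))"
  using h2_inner_kern[OF g(1) b, of "n + i"]
    h2_inner_proj_perp_of_orthogonal(2)[OF h2_orthonormal_in_H2[OF ON] g(1) kern_in_H2[OF b] g(2)]
  by (simp add: funpow_add add.commute)

lemma norm_h2_inner_normalize_mult_le:
  assumes "f \<in> H2" "v \<in> H2" "h \<in> H2"
  shows "cmod (h2_inner f (h2_normalize v)) * cmod (h2_inner v h) \<le> cmod (h2_inner f v) * h2_norm h"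
proof (cases "h2_norm v = 0")
  case False
  hence "0 < h2_norm v" using h2_norm_nonneg[OF assms(2)] by simp
  hence "cmod (h2_inner f v) / h2_norm v * cmod (h2_inner v h)
      \<le> cmod (h2_inner f v) / h2_norm v * (h2_norm v * h2_norm h)"
    by (intro mult_left_mono h2_cauchy_schwarz assms) auto
  thus ?thesis using False assms by (simp add: h2_inner_normalize_right norm_divide h2_norm_nonneg)
qed (use assms h2_norm_nonneg in \<open>simp add: h2_inner_normalize_right\<close>)

lemma norm_h2_inner_normalize_proj_perp_kern_le:
  assumes ON: "h2_orthonormal Bs" and f: "f \<in> H2" and h: "h \<in> H2" "\<And>B. B \<in> set Bs \<Longrightarrow> h2_inner h B = 0"
    and a: "cmod a < 1"
  shows "cmod (h2_inner f (h2_normalize (proj_perp Bs (kern n a)))) * cmod ((deriv ^^ n) h a)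
    \<le> cmod ((deriv ^^ n) (proj_perp Bs f) a) * h2_norm h"
proof -
  have H: "\<And>B. B \<in> set Bs \<Longrightarrow> B \<in> H2" using h2_orthonormal_in_H2[OF ON] .
  have "h2_inner f (proj_perp Bs (kern n a)) = (deriv ^^ n) (proj_perp Bs f) a"
    using proj_perp_self_adjoint[OF H f kern_in_H2[OF a]] h2_inner_kern[OF h2_orthonormal_proj_perp_in_H2[OF ON f] a]
    by simp
  moreover have "h2_inner (proj_perp Bs (kern n a)) h = cnj ((deriv ^^ n) h a)"
    using h2_inner_proj_perp_of_orthogonal(1)[OF H h(1) kern_in_H2[OF a] h(2)]
      h2_inner_commute[OF h(1) kern_in_H2[OF a]] h2_inner_kern[OF h(1) a] by simp
  moreover have "proj_perp Bs (kern n a) \<in> H2" using H kern_in_H2[OF a] by (rule proj_perp_in_H2)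
  ultimately show ?thesis using norm_h2_inner_normalize_mult_le[OF f _ h(1)] by fastforce
qed

lemma norm_h2_inner_normalize_eq:
  assumes f: "f \<in> H2" and h: "h \<in> H2"
  shows "cmod (h2_inner f (h2_normalize h)) = cmod (h2_inner f h / of_real (h2_sqnorm h)) * h2_norm h"
  using h2_norm_power2[OF h, symmetric] h2_norm_nonneg[OF h] f h
  by (cases "h2_norm h = 0") (auto simp: h2_inner_normalize_right norm_divide norm_mult power2_eq_square)

lemma higher_deriv_proj_perp_quotient_tendsto:
  fixes f :: "complex \<Rightarrow> complex" and Bs :: "(complex \<Rightarrow> complex) list" and n j :: nat and b :: complex
  defines "g \<equiv> proj_perp Bs f" and "h \<equiv> proj_perp Bs (kern (n + j) b)"
  assumes ON: "h2_orthonormal Bs" and f: "f \<in> H2" and b: "cmod b < 1"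
    and nonnull: "h2_sqnorm h \<noteq> 0"
    and below: "\<forall>i<j. h2_sqnorm (proj_perp Bs (kern (n + i) b)) = 0"
  shows "eventually (\<lambda>a. (deriv ^^ n) h a \<noteq> 0) (at b)"
    and "((\<lambda>a. (deriv ^^ n) g a / (deriv ^^ n) h a) \<longlongrightarrow> h2_inner g h / of_real (h2_sqnorm h)) (at b)"
proof -
  have H: "\<And>B. B \<in> set Bs \<Longrightarrow> B \<in> H2" using h2_orthonormal_in_H2[OF ON] .
  have Q: "proj_perp Bs (kern m b) \<in> H2" for m using H kern_in_H2[OF b] by (rule proj_perp_in_H2)
  have h: "h \<in> H2" "\<And>B. B \<in> set Bs \<Longrightarrow> h2_inner h B = 0"
    unfolding h_def using Q h2_inner_proj_perp_orthogonal[OF ON kern_in_H2[OF b]] by auto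
  have g: "g \<in> H2" "\<And>B. B \<in> set Bs \<Longrightarrow> h2_inner g B = 0"
    unfolding g_def using h2_orthonormal_proj_perp_in_H2[OF ON f] h2_inner_proj_perp_orthogonal[OF ON f] by auto
  have holo: "(deriv ^^ n) u holomorphic_on ball 0 1" if "u \<in> H2" for u
    using H2_holomorphic[OF that] by (intro holomorphic_higher_deriv) auto
  note quotient = divide_tendsto_higher_deriv_divide[OF holo[OF g(1)] holo[OF h(1)] open_ball, of b j]
  show "eventually (\<lambda>a. (deriv ^^ n) h a \<noteq> 0) (at b)"
    and "((\<lambda>a. (deriv ^^ n) g a / (deriv ^^ n) h a) \<longlongrightarrow> h2_inner g h / of_real (h2_sqnorm h)) (at b)"
    using quotient b nonnull below Q h(1)
    by (simp_all add: higher_deriv_eq_h2_inner_proj_perp_kern[OF ON g b]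
        higher_deriv_eq_h2_inner_proj_perp_kern[OF ON h b] h2_inner_null_right h2_inner_self flip: h_def)
qed

lemma h2_inner_normalize_proj_perp_kern_local_bound:
  fixes f :: "complex \<Rightarrow> complex" and Bs :: "(complex \<Rightarrow> complex) list"
  defines "\<phi> \<equiv> \<lambda>n a. cmod (h2_inner f (h2_normalize (proj_perp Bs (kern n a))))"
  assumes ON: "h2_orthonormal Bs" and f: "f \<in> H2" and b: "cmod b < 1"
  obtains n' where "h2_sqnorm (proj_perp Bs (kern n' b)) \<noteq> 0"
    "\<And>\<epsilon>. \<epsilon> > 0 \<Longrightarrow> eventually (\<lambda>a. \<phi> n a < \<phi> n' b + \<epsilon>) (nhds b)"
proof -
  have H: "\<And>B. B \<in> set Bs \<Longrightarrow> B \<in> H2" using h2_orthonormal_in_H2[OF ON] .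
  obtain m where "h2_sqnorm (proj_perp Bs (kern m b)) \<noteq> 0" "n \<le> m"
    using exists_proj_perp_kern_nonnull[OF ON b] .
  hence "\<exists>j. h2_sqnorm (proj_perp Bs (kern (n + j) b)) \<noteq> 0" by (intro exI[of _ "m - n"]) auto
  then obtain j where j: "h2_sqnorm (proj_perp Bs (kern (n + j) b)) \<noteq> 0"
    and below: "\<forall>i<j. h2_sqnorm (proj_perp Bs (kern (n + i) b)) = 0"
    using exists_least_iff[where P = "\<lambda>j. h2_sqnorm (proj_perp Bs (kern (n + j) b)) \<noteq> 0"] by blast
  define h where "h = proj_perp Bs (kern (n + j) b)"
  define g where "g = proj_perp Bs f"
  have h: "h \<in> H2" "\<And>B. B \<in> set Bs \<Longrightarrow> h2_inner h B = 0"
    unfolding h_def using h2_orthonormal_proj_perp_in_H2[OF ON kern_in_H2[OF b]]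
      h2_inner_proj_perp_orthogonal[OF ON kern_in_H2[OF b]] by auto
  note quotient = higher_deriv_proj_perp_quotient_tendsto[where n = n and j = j, OF ON f b j below,
      folded g_def h_def]
  have limit: "\<phi> (n + j) b = cmod (h2_inner g h / of_real (h2_sqnorm h)) * h2_norm h"
    using norm_h2_inner_normalize_eq[OF f h(1)] h2_inner_proj_perp_of_orthogonal(1)[OF H h(1) f h(2)]
    by (simp add: \<phi>_def g_def flip: h_def)
  show ?thesis
  proof (rule that[of "n + j"])
    show "h2_sqnorm (proj_perp Bs (kern (n + j) b)) \<noteq> 0" by (rule j)
    fix \<epsilon> :: real assume \<epsilon>: "\<epsilon> > 0"
    have "((\<lambda>a. cmod ((deriv ^^ n) g a / (deriv ^^ n) h a) * h2_norm h) \<longlongrightarrow> \<phi> (n + j) b) (at b)"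
      unfolding limit by (intro tendsto_intros quotient(2))
    hence "eventually (\<lambda>a. cmod ((deriv ^^ n) g a / (deriv ^^ n) h a) * h2_norm h < \<phi> (n + j) b + \<epsilon>) (at b)"
      by (rule order_tendstoD(2)) (use \<epsilon> in simp)
    moreover have "eventually (\<lambda>a. a \<in> ball 0 1) (at b)"
      using b by (intro eventually_at_in_open') auto
    ultimately have "eventually (\<lambda>a. \<phi> n a < \<phi> (n + j) b + \<epsilon>) (at b)"
      using quotient(1)
    proof eventually_elim
      case (elim a)
      have "\<phi> n a * cmod ((deriv ^^ n) h a) \<le> cmod ((deriv ^^ n) g a) * h2_norm h"
        unfolding \<phi>_def g_def using elim by (intro norm_h2_inner_normalize_proj_perp_kern_le[OF ON f h]) auto
      hence "\<phi> n a \<le> cmod ((deriv ^^ n) g a / (deriv ^^ n) h a) * h2_norm h"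
        using elim by (simp add: norm_divide field_simps)
      thus ?case using elim by linarith
    qed
    moreover have "\<phi> n b < \<phi> (n + j) b + \<epsilon>"
    proof (cases "j = 0")
      case False
      hence "h2_normalize (proj_perp Bs (kern n b)) = (\<lambda>z. 0)"
        using below[rule_format, of 0] h2_orthonormal_proj_perp_in_H2[OF ON kern_in_H2[OF b]]
        by (simp add: h2_normalize_null)
      thus ?thesis using \<epsilon> by (simp add: \<phi>_def add_nonneg_pos)
    qed (use \<epsilon> in simp)
    ultimately show "eventually (\<lambda>a. \<phi> n a < \<phi> (n + j) b + \<epsilon>) (nhds b)"
      by (simp add: eventually_nhds_conv_at)
  qed
qed

section \<open>Attainment of the supremum\<close>

lemma compact_uniform_strict_upper_bound:
  fixes \<phi> :: "'a::topological_space \<Rightarrow> real"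
  assumes K: "compact K" and local: "\<And>b. b \<in> K \<Longrightarrow> \<exists>t<S. eventually (\<lambda>a. \<phi> a \<le> t) (nhds b)"
  shows "\<exists>t<S. \<forall>a\<in>K. \<phi> a \<le> t"
proof (cases "K = {}")
  case False
  from local obtain t U
    where tU: "\<And>b. b \<in> K \<Longrightarrow> t b < S \<and> open (U b) \<and> b \<in> U b \<and> (\<forall>a\<in>U b. \<phi> a \<le> t b)"
    unfolding eventually_nhds by metis
  obtain C where C: "C \<subseteq> K" "finite C" "K \<subseteq> (\<Union>b\<in>C. U b)"
    using compactE_image[OF K, of K U] tU by blast
  with False have "C \<noteq> {}" by auto
  show ?thesis
  proof (intro exI conjI ballI)
    show "Max (t ` C) < S" using C \<open>C \<noteq> {}\<close> tU by (subst Max_less_iff) auto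
    fix a assume "a \<in> K"
    then obtain c where c: "c \<in> C" "a \<in> U c" using C by auto
    hence "\<phi> a \<le> t c" using tU C by auto
    also have "t c \<le> Max (t ` C)" using C c by (intro Max_ge) auto
    finally show "\<phi> a \<le> Max (t ` C)" .
  qed
qed (intro exI[of _ "S - 1"], auto)

lemma finite_uniform_strict_upper_bound:
  assumes "finite I" "\<And>i. i \<in> I \<Longrightarrow> \<exists>t<S. \<forall>a\<in>K. \<phi> i a \<le> (t::real)"
  shows "\<exists>t<S. \<forall>i\<in>I. \<forall>a\<in>K. \<phi> i a \<le> t"
  using assms
proof (induction I rule: finite_induct)
  case (insert i I)
  obtain t1 where t1: "t1 < S" "\<forall>i\<in>I. \<forall>a\<in>K. \<phi> i a \<le> t1" using insert by auto
  obtain t2 where t2: "t2 < S" "\<forall>a\<in>K. \<phi> i a \<le> t2" using insert.prems by auto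
  show ?case using t1 t2 by (intro exI[of _ "max t1 t2"]) (auto simp: le_max_iff_disj)
qed (intro exI[of _ "S - 1"], auto)

lemma SUP_attained_if_tendsto_0_at_boundary:
  fixes \<phi> :: "nat \<Rightarrow> complex \<Rightarrow> real" and D :: "(nat \<times> complex) set"
  assumes D: "D \<subseteq> {(n, a). cmod a < 1}" and nonneg: "\<And>n a. 0 \<le> \<phi> n a"
    and bdd: "bdd_above ((\<lambda>p. \<phi> (fst p) (snd p)) ` D)"
    and lim: "((\<lambda>(n, a). \<phi> n a) \<longlongrightarrow> 0) at_boundary"
    and local: "\<And>n b. cmod b < 1 \<Longrightarrow>
      \<exists>n'. (n', b) \<in> D \<and> (\<forall>\<epsilon>>0. eventually (\<lambda>a. \<phi> n a < \<phi> n' b + \<epsilon>) (nhds b))"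
  shows "\<exists>p\<in>D. \<phi> (fst p) (snd p) = (SUP p\<in>D. \<phi> (fst p) (snd p))"
proof (rule ccontr)
  let ?w = "\<lambda>p. \<phi> (fst p) (snd p)"
  define S where "S = (SUP p\<in>D. ?w p)"
  assume "\<not> (\<exists>p\<in>D. ?w p = (SUP p\<in>D. ?w p))"
  hence less_S: "?w p < S" if "p \<in> D" for p
    using cSUP_upper[OF that bdd] that unfolding S_def by force
  obtain n0 where "(n0, 0) \<in> D" using local[of 0 0] by auto
  hence S_pos: "0 < S" using less_S nonneg[of n0 0] by fastforce
  obtain N r where r: "r < 1" and far: "\<And>n a. cmod a < 1 \<Longrightarrow> N \<le> n \<or> r < cmod a \<Longrightarrow> \<phi> n a < S / 2"
    using order_tendstoD(2)[OF lim half_gt_zero[OF S_pos]] unfolding eventually_at_boundary by auto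
  have "\<exists>t<S. \<forall>a\<in>cball 0 r. \<phi> n a \<le> t" for n
  proof (rule compact_uniform_strict_upper_bound[OF compact_cball])
    fix b :: complex assume "b \<in> cball 0 r"
    then obtain n' where n': "(n', b) \<in> D"
      and ev: "\<And>\<epsilon>. \<epsilon> > 0 \<Longrightarrow> eventually (\<lambda>a. \<phi> n a < \<phi> n' b + \<epsilon>) (nhds b)"
      using local[of b n] r by auto
    have "\<phi> n' b < S" using less_S[OF n'] by simp
    then show "\<exists>t<S. eventually (\<lambda>a. \<phi> n a \<le> t) (nhds b)"
      using ev[of "(S - \<phi> n' b) / 2"]
      by (intro exI[of _ "(S + \<phi> n' b) / 2"]) (auto elim!: eventually_mono simp: field_simps)
  qed
  then obtain t where t: "t < S" "\<And>n a. n < N \<Longrightarrow> a \<in> cball 0 r \<Longrightarrow> \<phi> n a \<le> t"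
    using finite_uniform_strict_upper_bound[of "{..<N}" S "cball 0 r" \<phi>] by auto
  have "?w p \<le> max (S / 2) t" if "p \<in> D" for p
    using that D far[of "snd p" "fst p"] t(2)[of "fst p" "snd p"] by (force simp: not_le)
  hence "S \<le> max (S / 2) t" unfolding S_def using \<open>(n0, 0) \<in> D\<close> by (intro cSUP_least) auto
  thus False using t(1) S_pos by simp
qed

lemma tendsto_0_at_boundaryD:
  fixes g :: "nat \<Rightarrow> complex \<Rightarrow> 'a::real_normed_vector"
  assumes "((\<lambda>(n, a). g n a) \<longlongrightarrow> 0) at_boundary" "\<epsilon> > 0"
  shows "\<exists>N r. r < 1 \<and> (\<forall>n a. cmod a < 1 \<and> (N \<le> n \<or> r < cmod a) \<longrightarrow> norm (g n a) < \<epsilon>)"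
  using tendstoD[OF assms] unfolding eventually_at_boundary by simp

lemma Bm_eq_normalize_proj_perp_ekern:
  "Bm ps n a = h2_normalize (proj_perp (gs_rev (rev ps)) (ekern n a))"
  by (simp add: Bm_def gram_schmidt_def proj_perp_rev)

lemma h2_inner_Bm_tendsto_0:
  assumes "\<forall>p\<in>set ps. cmod (snd p) < 1" "f \<in> H2"
  shows "((\<lambda>(n, a). h2_inner f (Bm ps n a)) \<longlongrightarrow> 0) at_boundary"
  using h2_inner_normalize_proj_perp_ekern_tendsto_0[OF _ assms(2)] gs_rev_orthonormal[of "rev ps"] assms(1)
  by (simp add: Bm_eq_normalize_proj_perp_ekern)

lemma norm_h2_inner_Bm_le:
  assumes "\<forall>p\<in>set ps. cmod (snd p) < 1" "f \<in> H2" "cmod a < 1"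
  shows "cmod (h2_inner f (Bm ps n a)) \<le> h2_norm f"
  using gs_rev_orthonormal[of "rev ps"] assms
  by (auto simp: Bm_eq_normalize_proj_perp_ekern
      intro!: norm_h2_inner_normalize_le h2_orthonormal_proj_perp_in_H2 ekern_in_H2)

lemma Bm_local_bound:
  assumes ps: "\<forall>p\<in>set ps. cmod (snd p) < 1" and f: "f \<in> H2" and b: "cmod b < 1"
  obtains n' where "(n', b) \<notin> set ps"
    "\<And>\<epsilon>. \<epsilon> > 0 \<Longrightarrow>
       eventually (\<lambda>a. cmod (h2_inner f (Bm ps n a)) < cmod (h2_inner f (Bm ps n' b)) + \<epsilon>) (nhds b)"
proof -
  define Bs where "Bs = gs_rev (rev ps)"
  have ON: "h2_orthonormal Bs"
    and null: "\<And>p. p \<in> set ps \<Longrightarrow> h2_sqnorm (proj_perp Bs (ekern (fst p) (snd p))) = 0"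
    using gs_rev_orthonormal[of "rev ps"] ps by (auto simp: Bs_def)
  have Bm: "Bm ps m a = h2_normalize (proj_perp Bs (kern m a))" if "cmod a < 1" for m a
    using h2_normalize_proj_perp_ekern[OF ON that] by (simp add: Bm_eq_normalize_proj_perp_ekern Bs_def)
  obtain n' where n': "h2_sqnorm (proj_perp Bs (kern n' b)) \<noteq> 0"
    and ev: "\<And>\<epsilon>. \<epsilon> > 0 \<Longrightarrow> eventually (\<lambda>a. cmod (h2_inner f (h2_normalize (proj_perp Bs (kern n a))))
      < cmod (h2_inner f (h2_normalize (proj_perp Bs (kern n' b)))) + \<epsilon>) (nhds b)"
    using h2_inner_normalize_proj_perp_kern_local_bound[OF ON f b] by blast
  show ?thesis
  proof (rule that[of n'])
    show "(n', b) \<notin> set ps"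
      using null[of "(n', b)"] n' h2_sqnorm_proj_perp_ekern_eq_0_iff[OF ON b] by auto
    fix \<epsilon> :: real assume "\<epsilon> > 0"
    have "eventually (\<lambda>a. a \<in> ball 0 1) (nhds b)"
      using b by (intro eventually_nhds_in_open) auto
    with ev[OF \<open>\<epsilon> > 0\<close>]
    show "eventually (\<lambda>a. cmod (h2_inner f (Bm ps n a)) < cmod (h2_inner f (Bm ps n' b)) + \<epsilon>) (nhds b)"
      by eventually_elim (simp add: Bm b)
  qed
qed

theorem theorem6:
  fixes ps :: "(nat \<times> complex) list" and f :: "complex \<Rightarrow> complex"
  assumes "distinct ps"
    and "\<forall>p\<in>set ps. cmod (snd p) < 1"
    and "f \<in> H2"
  shows "(\<forall>\<epsilon>>0. \<exists>N r. r < 1 \<and>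
            (\<forall>n a. cmod a < 1 \<and> (n, a) \<notin> set ps \<and> (N \<le> n \<or> r < cmod a) \<longrightarrow>
                   cmod (h2_inner f (Bm ps n a)) < \<epsilon>))
       \<and> (\<exists>nm am. cmod am < 1 \<and> (nm, am) \<notin> set ps \<and>
            cmod (h2_inner f (Bm ps nm am)) =
              (SUP p\<in>{(n, a). cmod a < 1 \<and> (n, a) \<notin> set ps}. cmod (h2_inner f (Bm ps (fst p) (snd p)))))"
proof -
  let ?D = "{(n, a). cmod a < 1 \<and> (n, a) \<notin> set ps}"
  have lim: "((\<lambda>(n, a). h2_inner f (Bm ps n a)) \<longlongrightarrow> 0) at_boundary"
    using h2_inner_Bm_tendsto_0[OF assms(2,3)] .
  have "\<forall>\<epsilon>>0. \<exists>N r. r < 1 \<and> (\<forall>n a. cmod a < 1 \<and> (n, a) \<notin> set ps \<and> (N \<le> n \<or> r < cmod a) \<longrightarrow>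
      cmod (h2_inner f (Bm ps n a)) < \<epsilon>)"
    using tendsto_0_at_boundaryD[OF lim] by fastforce
  moreover have "\<exists>p\<in>?D. cmod (h2_inner f (Bm ps (fst p) (snd p))) =
      (SUP p\<in>?D. cmod (h2_inner f (Bm ps (fst p) (snd p))))"
  proof (rule SUP_attained_if_tendsto_0_at_boundary)
    show "bdd_above ((\<lambda>p. cmod (h2_inner f (Bm ps (fst p) (snd p)))) ` ?D)"
      using norm_h2_inner_Bm_le[OF assms(2,3)] by (intro bdd_aboveI2[where M = "h2_norm f"]) auto
    show "((\<lambda>(n, a). cmod (h2_inner f (Bm ps n a))) \<longlongrightarrow> 0) at_boundary"
      using tendsto_norm_zero[OF lim] by (simp add: case_prod_beta')
    show "\<exists>n'. (n', b) \<in> ?D \<and> (\<forall>\<epsilon>>0. eventually (\<lambda>a. cmod (h2_inner f (Bm ps n a))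
        < cmod (h2_inner f (Bm ps n' b)) + \<epsilon>) (nhds b))" if "cmod b < 1" for n b
      using Bm_local_bound[OF assms(2,3) that] that by blast
  qed auto
  ultimately show ?thesis by auto
qed

end
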